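(* Let $\epsilon$ be a positive parameter. Then there is a deterministic algorithm that, given query access to a list $a_1\le a_2\le\cdots\le a_n$ of nonnegative real numbers sorted in nondecreasing order (and given $n$ and $\epsilon$), outputs a $(1+\epsilon)$-approximation for the sum $\sum_{i=1}^n a_i$ in time $$O\!\left(\frac{1}{\epsilon}\min\!\left(\log n,\ \log\frac{x_{max}}{x_{min}}\right)\cdot\left(\log\frac{1}{\epsilon}+\log\log n\right)\right),$$ where $x_{max}$ and $x_{min}$ are the largest and the least positive elements of the input list, respectively.
   Context: A real number $s$ is a $(1+\epsilon)$-approximation for the sum of $a_1,\dots,a_n$ if $\frac{1}{1+\epsilon}\sum_{i=1}^n a_i\le s\le (1+\epsilon)\sum_{i=1}^n a_i$. The algorithm accesses the input list by reading (querying) individual entries $a_i$ at unit cost; running time counts such queries and arithmetic operations. *)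

theory Defs
  imports Complex_Main
begin

text \<open>A program is a fixed finite list of instructions
(independent of n and epsilon). Every executed instruction costs one time unit;
in particular every query and every arithmetic operation costs 1.\<close>

datatype instr =
    Const nat real
  | Add nat nat nat
  | Sub nat nat nat
  | Mul nat nat nat
  | Dvd nat nat nat
  | Flr nat nat
  | Qry nat nat               (* r_k := a_(floor r_i)  (1-based; 0 if out of range) *)
  | JmpLe nat nat nat
  | Halt

type_synonym prog = "instr list"
type_synonym state = "nat \<times> (nat \<Rightarrow> real)"

definition query :: "real list \<Rightarrow> real \<Rightarrow> real" where
  "query xs r = (let i = \<lfloor>r\<rfloor> in
     if 1 \<le> i \<and> i \<le> int (length xs) then xs ! (nat i - 1) else 0)"

definition halted :: "prog \<Rightarrow> state \<Rightarrow> bool" where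
  "halted P s = (fst s \<ge> length P \<or> P ! fst s = Halt)"

fun exec :: "real list \<Rightarrow> instr \<Rightarrow> nat \<Rightarrow> (nat \<Rightarrow> real) \<Rightarrow> state" where
  "exec xs (Const k c) pc r = (Suc pc, r(k := c))"
| "exec xs (Add k i j) pc r = (Suc pc, r(k := r i + r j))"
| "exec xs (Sub k i j) pc r = (Suc pc, r(k := r i - r j))"
| "exec xs (Mul k i j) pc r = (Suc pc, r(k := r i * r j))"
| "exec xs (Dvd k i j) pc r = (Suc pc, r(k := r i / r j))"
| "exec xs (Flr k i) pc r = (Suc pc, r(k := of_int \<lfloor>r i\<rfloor>))"
| "exec xs (Qry k i) pc r = (Suc pc, r(k := query xs (r i)))"
| "exec xs (JmpLe i j t) pc r = (if r i \<le> r j then (t, r) else (Suc pc, r))"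
| "exec xs Halt pc r = (pc, r)"

definition step :: "prog \<Rightarrow> real list \<Rightarrow> state \<Rightarrow> state" where
  "step P xs s = (if halted P s then s else exec xs (P ! fst s) (fst s) (snd s))"

text \<open>Initial state: register 0 holds n, register 1 holds epsilon, all others 0.
The output is the content of register 0 upon halting.\<close>
definition init :: "nat \<Rightarrow> real \<Rightarrow> state" where
  "init n \<epsilon> = (0, (\<lambda>_. 0)(0 := real n, 1 := \<epsilon>))"

definition run :: "prog \<Rightarrow> real list \<Rightarrow> real \<Rightarrow> nat \<Rightarrow> state" where
  "run P xs \<epsilon> t = (step P xs ^^ t) (init (length xs) \<epsilon>)"

definition halts_within :: "prog \<Rightarrow> real list \<Rightarrow> real \<Rightarrow> real \<Rightarrow> (real \<Rightarrow> bool) \<Rightarrow> bool" where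
  "halts_within P xs \<epsilon> T Q = (\<exists>t. real t \<le> T \<and> halted P (run P xs \<epsilon> t) \<and> Q (snd (run P xs \<epsilon> t) 0))"

definition approx :: "real \<Rightarrow> real \<Rightarrow> real \<Rightarrow> bool" where
  "approx \<epsilon> S s = (S / (1 + \<epsilon>) \<le> s \<and> s \<le> (1 + \<epsilon>) * S)"

definition plog :: "real \<Rightarrow> real" where
  "plog x = log 2 (max 1 x)"

definition ratio :: "real list \<Rightarrow> real" where
  "ratio xs = (if \<exists>x\<in>set xs. x > 0
     then Max (set xs) / Min {x \<in> set xs. x > 0} else 1)"

definition bound :: "real \<Rightarrow> real list \<Rightarrow> real" where
  "bound \<epsilon> xs = (1 + 1 / \<epsilon>) * (1 + min (plog (real (length xs))) (plog (ratio xs)))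
      * (1 + plog (1 / \<epsilon>) + plog (plog (real (length xs))))"

end

theory Submission
  imports Defs "HOL-Number_Theory.Fib"
begin

text \<open>Let \<open>T0\<close> be the largest entry, \<open>g = min \<epsilon> 1 / 4\<close>, \<open>\<rho> = 1 + g\<close> and \<open>t_i = T0 / \<rho> ^ i\<close>.
  Rounding every entry down to the grid \<open>t_0 > t_1 > \<dots>\<close> loses at most a factor \<open>\<rho>\<close>, and the sum of
  the rounded entries above \<open>t_m\<close> is \<open>\<Sum>i<m. c(t_i) (t_i - t_(i+1)) + c(t_m) t_m\<close>, where \<open>c(T)\<close> is the
  number of entries \<open>\<ge> T\<close>. In a sorted list, \<open>c(T) \<ge> y\<close> is decided by the single query at position
  \<open>n + 1 - \<lceil>y\<rceil>\<close>, so \<open>c(T)\<close> is found up to a factor \<open>\<rho>\<close> by a Fibonacci search over the exponents of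
  \<open>\<rho> \<le> n\<close>, with \<open>O(log (log n / log \<rho>))\<close> queries. The levels are processed in turn, and the
  process stops as soon as the entries below the current threshold are negligible: either all
  positive entries are already counted, or \<open>n t_m\<close> is at most \<open>g\<close> times the current estimate. One of
  the two happens after \<open>O(min (log (x_max / x_min), log (n / g\<^sup>2)) / g)\<close> levels. Short lists, with
  \<open>n g < 1\<close>, are summed exactly.\<close>

section \<open>Rank queries in sorted lists\<close>

lemma sorted_rank_iff_card:
  assumes sorted: "sorted xs" and up: "\<And>x y. x \<le> y \<Longrightarrow> Q x \<Longrightarrow> Q y"
    and r: "1 \<le> r" "r \<le> length xs"
  shows "Q (xs ! (length xs - r)) \<longleftrightarrow> r \<le> card {i. i < length xs \<and> Q (xs ! i)}"
proof
  assume q: "Q (xs ! (length xs - r))"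
  have "{length xs - r..<length xs} \<subseteq> {i. i < length xs \<and> Q (xs ! i)}"
  proof
    fix i assume "i \<in> {length xs - r..<length xs}"
    hence i: "length xs - r \<le> i" "i < length xs" by auto
    have "xs ! (length xs - r) \<le> xs ! i" using sorted i by (simp add: sorted_nth_mono)
    thus "i \<in> {i. i < length xs \<and> Q (xs ! i)}" using up q i by blast
  qed
  from card_mono[OF _ this] show "r \<le> card {i. i < length xs \<and> Q (xs ! i)}" using r by simp
next
  assume card: "r \<le> card {i. i < length xs \<and> Q (xs ! i)}"
  show "Q (xs ! (length xs - r))"
  proof (rule ccontr)
    assume nq: "\<not> Q (xs ! (length xs - r))"
    have "{i. i < length xs \<and> Q (xs ! i)} \<subseteq> {length xs - r + 1..<length xs}"
    proof
      fix i assume "i \<in> {i. i < length xs \<and> Q (xs ! i)}"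
      hence i: "i < length xs" "Q (xs ! i)" by auto
      have "\<not> i \<le> length xs - r"
      proof
        assume "i \<le> length xs - r"
        hence "xs ! i \<le> xs ! (length xs - r)" using sorted r by (simp add: sorted_nth_mono)
        thus False using up i nq by blast
      qed
      thus "i \<in> {length xs - r + 1..<length xs}" using i by auto
    qed
    from card_mono[OF _ this] have "card {i. i < length xs \<and> Q (xs ! i)} \<le> r - 1"
      using r by simp
    thus False using card r by linarith
  qed
qed

lemma query_of_int:
  "query xs (of_int k) = (if 1 \<le> k \<and> k \<le> int (length xs) then xs ! (nat k - 1) else 0)"
  unfolding query_def Let_def by simp

lemma query_of_nat:
  "query xs (real k) = (if 1 \<le> k \<and> k \<le> length xs then xs ! (k - 1) else 0)"
proof -
  have "query xs (real k) = query xs (of_int (int k))" by simp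
  also have "\<dots> = (if 1 \<le> k \<and> k \<le> length xs then xs ! (k - 1) else 0)"
    unfolding query_of_int by (auto simp: nat_diff_distrib')
  finally show ?thesis .
qed

text \<open>The hypothesis \<open>\<not> Q 0\<close> handles out-of-range positions, where queries answer \<open>0\<close>.\<close>

lemma query_rank_iff:
  assumes sorted: "sorted xs" and up: "\<And>x y. x \<le> y \<Longrightarrow> Q x \<Longrightarrow> Q y" and "\<not> Q 0"
    and y: "1 \<le> y"
  shows "Q (query xs (real (length xs) + 1 + of_int \<lfloor>- y\<rfloor>))
    \<longleftrightarrow> y \<le> real (card {i. i < length xs \<and> Q (xs ! i)})"
proof -
  define c where "c = card {i. i < length xs \<and> Q (xs ! i)}"
  have c_le: "c \<le> length xs" unfolding c_def
    by (rule order.trans[OF card_mono[of "{..<length xs}"]]) auto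
  define r where "r = \<lceil>y\<rceil>"
  have r1: "1 \<le> r" using y unfolding r_def by linarith
  have pos: "real (length xs) + 1 + of_int \<lfloor>- y\<rfloor> = of_int (int (length xs) + 1 - r)"
    unfolding r_def ceiling_def by simp
  have y_c: "y \<le> real c \<longleftrightarrow> r \<le> int c" unfolding r_def by (simp add: ceiling_le_iff)
  show ?thesis
  proof (cases "r \<le> int (length xs)")
    case True
    have "nat (int (length xs) + 1 - r) - 1 = length xs - nat r" using True r1 by linarith
    hence "query xs (of_int (int (length xs) + 1 - r)) = xs ! (length xs - nat r)"
      unfolding query_of_int using True r1 by simp
    moreover have "Q (xs ! (length xs - nat r)) \<longleftrightarrow> nat r \<le> c"
      unfolding c_def using sorted_rank_iff_card[OF sorted, of Q "nat r"] up True r1 by simp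
    ultimately show ?thesis using pos y_c r1 c_def by auto
  next
    case False
    hence "query xs (of_int (int (length xs) + 1 - r)) = 0" unfolding query_of_int by simp
    thus ?thesis using pos y_c \<open>\<not> Q 0\<close> False c_le c_def by auto
  qed
qed

definition count_ge :: "real list \<Rightarrow> real \<Rightarrow> real" where
  "count_ge xs T = real (card {j. j < length xs \<and> T \<le> xs ! j})"

definition count_pos :: "real list \<Rightarrow> real" where
  "count_pos xs = real (card {j. j < length xs \<and> 0 < xs ! j})"

definition tail_sum :: "real list \<Rightarrow> real \<Rightarrow> real" where
  "tail_sum xs T = (\<Sum>j<length xs. if xs ! j < T then xs ! j else 0)"

lemma query_count_ge_iff:
  assumes "sorted xs" "0 < T" "1 \<le> y"
  shows "T \<le> query xs (real (length xs) + 1 + of_int \<lfloor>- y\<rfloor>) \<longleftrightarrow> y \<le> count_ge xs T"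
  unfolding count_ge_def using assms by (intro query_rank_iff) auto

lemma query_count_pos_iff:
  assumes "sorted xs" "1 \<le> y"
  shows "0 < query xs (real (length xs) + 1 + of_int \<lfloor>- y\<rfloor>) \<longleftrightarrow> y \<le> count_pos xs"
  unfolding count_pos_def using assms by (intro query_rank_iff) auto

lemma real_card_eq_sum_indicator:
  "real (card {j. j < (n::nat) \<and> P j}) = (\<Sum>j<n. if P j then 1 else 0)"
  by (simp add: sum.If_cases Int_def)

lemma count_ge_antimono: "T' \<le> T \<Longrightarrow> count_ge xs T \<le> count_ge xs T'"
  unfolding count_ge_def by (intro of_nat_mono card_mono) auto

lemma count_ge_le_length: "count_ge xs T \<le> real (length xs)"
proof -
  have "card {j. j < length xs \<and> T \<le> xs ! j} \<le> card {..<length xs}" by (intro card_mono) auto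
  thus ?thesis unfolding count_ge_def by simp
qed

lemma tail_sum_le_count:
  assumes nonneg: "\<forall>x\<in>set xs. 0 \<le> x" and "0 < T"
  shows "tail_sum xs T \<le> T * (count_pos xs - count_ge xs T)"
proof -
  have "tail_sum xs T
     \<le> (\<Sum>j<length xs. T * ((if 0 < xs ! j then 1 else 0) - (if T \<le> xs ! j then 1 else 0)))"
    unfolding tail_sum_def
  proof (rule sum_mono)
    fix j assume "j \<in> {..<length xs}"
    hence "0 \<le> xs ! j" using nonneg by auto
    thus "(if xs ! j < T then xs ! j else 0)
      \<le> T * ((if 0 < xs ! j then 1 else 0) - (if T \<le> xs ! j then 1 else 0))"
      using \<open>0 < T\<close> by auto
  qed
  also have "\<dots> = T * (count_pos xs - count_ge xs T)"
    unfolding count_ge_def count_pos_def real_card_eq_sum_indicator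
      sum_distrib_left[symmetric] sum_subtractf by simp
  finally show ?thesis .
qed

lemma tail_sum_le_length:
  assumes nonneg: "\<forall>x\<in>set xs. 0 \<le> x" and "0 \<le> T"
  shows "tail_sum xs T \<le> real (length xs) * T"
proof -
  have "tail_sum xs T \<le> (\<Sum>j<length xs. T)"
    unfolding tail_sum_def using nonneg \<open>0 \<le> T\<close> by (intro sum_mono) (auto simp: nth_mem)
  thus ?thesis by simp
qed

section \<open>Rounding to a geometric grid\<close>

definition threshold :: "real \<Rightarrow> real \<Rightarrow> nat \<Rightarrow> real" where
  "threshold T0 \<rho> i = T0 / \<rho> ^ i"

lemma threshold_Suc: "1 < \<rho> \<Longrightarrow> threshold T0 \<rho> (Suc i) = threshold T0 \<rho> i / \<rho>"
  by (simp add: threshold_def field_simps)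

lemma threshold_pos: "0 < T0 \<Longrightarrow> 1 < \<rho> \<Longrightarrow> 0 < threshold T0 \<rho> i"
  by (simp add: threshold_def)

lemma threshold_antimono:
  "0 < T0 \<Longrightarrow> 1 < \<rho> \<Longrightarrow> i \<le> j \<Longrightarrow> threshold T0 \<rho> j \<le> threshold T0 \<rho> i"
  unfolding threshold_def by (intro divide_left_mono power_increasing) auto

text \<open>For \<open>x \<ge> threshold T0 \<rho> m\<close>, the sum telescopes to the largest threshold \<open>\<le> x\<close>
  among the first \<open>m + 1\<close>; below \<open>threshold T0 \<rho> m\<close> it is \<open>0\<close>.\<close>

definition grid_round :: "real \<Rightarrow> real \<Rightarrow> nat \<Rightarrow> real \<Rightarrow> real" where
  "grid_round T0 \<rho> m x =
     (\<Sum>i<m. if threshold T0 \<rho> i \<le> x then threshold T0 \<rho> i * ((\<rho> - 1) / \<rho>) else 0)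
     + (if threshold T0 \<rho> m \<le> x then threshold T0 \<rho> m else 0)"

lemma grid_round_Suc:
  assumes "0 < T0" "1 < \<rho>"
  shows "grid_round T0 \<rho> (Suc m) x =
    (if threshold T0 \<rho> m \<le> x then grid_round T0 \<rho> m x
     else grid_round T0 \<rho> m x + (if threshold T0 \<rho> (Suc m) \<le> x then threshold T0 \<rho> (Suc m) else 0))"
proof -
  have "threshold T0 \<rho> m * ((\<rho> - 1) / \<rho>) = threshold T0 \<rho> m - threshold T0 \<rho> (Suc m)"
    using assms by (simp add: threshold_Suc field_simps)
  moreover have "threshold T0 \<rho> (Suc m) \<le> threshold T0 \<rho> m"
    using threshold_antimono[OF assms] by simp
  ultimately show ?thesis unfolding grid_round_def by auto
qed

lemma grid_round_below:
  assumes "0 < T0" "1 < \<rho>" "x < threshold T0 \<rho> m"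
  shows "grid_round T0 \<rho> m x = 0"
  using assms(3)
proof (induction m)
  case 0 thus ?case by (simp add: grid_round_def)
next
  case (Suc m)
  have "threshold T0 \<rho> (Suc m) \<le> threshold T0 \<rho> m"
    using threshold_antimono[OF assms(1,2)] by simp
  thus ?case using Suc by (simp add: grid_round_Suc[OF assms(1,2)])
qed

lemma grid_round_bounds:
  assumes "0 < T0" "1 < \<rho>" "0 \<le> x"
  shows "0 \<le> grid_round T0 \<rho> m x \<and> grid_round T0 \<rho> m x \<le> x"
proof (induction m)
  case 0 thus ?case using assms threshold_pos[OF assms(1,2), of 0] by (simp add: grid_round_def)
next
  case (Suc m)
  show ?case
  proof (cases "threshold T0 \<rho> m \<le> x")
    case False
    thus ?thesis using grid_round_below[OF assms(1,2) not_le_imp_less[OF False]]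
        threshold_pos[OF assms(1,2)] assms(3) by (simp add: grid_round_Suc[OF assms(1,2)] less_imp_le)
  qed (use Suc in \<open>simp add: grid_round_Suc[OF assms(1,2)]\<close>)
qed

lemma grid_round_ge:
  assumes T0: "0 < T0" and \<rho>: "1 < \<rho>"
  shows "threshold T0 \<rho> m \<le> x \<Longrightarrow> x \<le> T0 \<Longrightarrow> x \<le> \<rho> * grid_round T0 \<rho> m x"
proof (induction m)
  case 0 thus ?case using \<rho> T0 by (simp add: grid_round_def threshold_def)
next
  case (Suc m)
  show ?case
  proof (cases "threshold T0 \<rho> m \<le> x")
    case True
    thus ?thesis using Suc by (simp add: grid_round_Suc[OF T0 \<rho>])
  next
    case False
    hence "x < \<rho> * threshold T0 \<rho> (Suc m)" using \<rho> by (simp add: threshold_Suc)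
    thus ?thesis using Suc.prems grid_round_below[OF T0 \<rho>] False
      by (simp add: grid_round_Suc[OF T0 \<rho>])
  qed
qed

definition layer_sum :: "real list \<Rightarrow> real \<Rightarrow> real \<Rightarrow> nat \<Rightarrow> real" where
  "layer_sum xs T0 \<rho> m =
     (\<Sum>i<m. count_ge xs (threshold T0 \<rho> i) * threshold T0 \<rho> i * ((\<rho> - 1) / \<rho>))"

lemma layer_sum_Suc:
  "layer_sum xs T0 \<rho> (Suc m) =
     layer_sum xs T0 \<rho> m + count_ge xs (threshold T0 \<rho> m) * threshold T0 \<rho> m * ((\<rho> - 1) / \<rho>)"
  by (simp add: layer_sum_def)

lemma sum_grid_round_eq:
  "(\<Sum>j<length xs. grid_round T0 \<rho> m (xs ! j))
     = layer_sum xs T0 \<rho> m + count_ge xs (threshold T0 \<rho> m) * threshold T0 \<rho> m"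
proof -
  have count: "(\<Sum>j<length xs. if T \<le> xs ! j then c else 0) = count_ge xs T * c" for T c
    unfolding count_ge_def real_card_eq_sum_indicator sum_distrib_right by (rule sum.cong) auto
  show ?thesis
    unfolding grid_round_def sum.distrib layer_sum_def
    by (subst sum.swap) (simp add: count mult.assoc)
qed

lemma sum_list_between_estimates:
  assumes sorted: "sorted xs" and nonneg: "\<forall>x\<in>set xs. 0 \<le> x" and "xs \<noteq> []"
    and T0: "T0 = xs ! (length xs - 1)" "0 < T0" and \<rho>: "1 < \<rho>" and T: "T = threshold T0 \<rho> m"
    and X: "X \<le> count_ge xs T" "count_ge xs T \<le> \<rho> * X"
    and E: "0 \<le> E" "E \<le> layer_sum xs T0 \<rho> m" "layer_sum xs T0 \<rho> m \<le> \<rho> * E"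
    and tail: "tail_sum xs T \<le> (\<rho> - 1) * (E + X * T)"
  shows "E + X * T \<le> sum_list xs" and "sum_list xs \<le> (\<rho>\<^sup>2 + (\<rho> - 1)) * (E + X * T)"
proof -
  let ?n = "length xs" and ?r = "grid_round T0 \<rho> m"
  have "0 < T" unfolding T using threshold_pos[OF T0(2) \<rho>] .
  have entry: "0 \<le> xs ! j \<and> xs ! j \<le> T0" if "j < ?n" for j
    using nonneg that sorted_nth_mono[OF sorted, of j "?n - 1"] T0(1) by auto
  have rounded: "(\<Sum>j<?n. ?r (xs ! j)) = layer_sum xs T0 \<rho> m + count_ge xs T * T"
    unfolding T by (rule sum_grid_round_eq)
  have sum_list: "sum_list xs = (\<Sum>j<?n. xs ! j)"
    by (simp add: sum_list_sum_nth atLeast0LessThan)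
  have "E + X * T \<le> layer_sum xs T0 \<rho> m + count_ge xs T * T"
    using E X \<open>0 < T\<close> by (intro add_mono mult_right_mono) auto
  also have "\<dots> \<le> (\<Sum>j<?n. xs ! j)"
    unfolding rounded[symmetric] using entry grid_round_bounds[OF T0(2) \<rho>] by (intro sum_mono) auto
  finally show "E + X * T \<le> sum_list xs" unfolding sum_list .
  have "layer_sum xs T0 \<rho> m + count_ge xs T * T \<le> \<rho> * E + \<rho> * X * T"
    using E X \<open>0 < T\<close> by (intro add_mono mult_right_mono) auto
  hence rounded_le: "(\<Sum>j<?n. ?r (xs ! j)) \<le> \<rho> * (E + X * T)"
    unfolding rounded by (simp add: algebra_simps)
  have split: "(\<Sum>j<?n. xs ! j) = (\<Sum>j<?n. if T \<le> xs ! j then xs ! j else 0) + tail_sum xs T"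
    unfolding tail_sum_def by (simp add: sum.distrib[symmetric]) (rule sum.cong, auto)
  have "(\<Sum>j<?n. if T \<le> xs ! j then xs ! j else 0) \<le> (\<Sum>j<?n. \<rho> * ?r (xs ! j))"
    using entry grid_round_ge[OF T0(2) \<rho>] grid_round_bounds[OF T0(2) \<rho>] \<rho> T
    by (intro sum_mono) (auto simp: less_imp_le)
  also have "\<dots> \<le> \<rho> * (\<rho> * (E + X * T))"
    unfolding sum_distrib_left[symmetric] using rounded_le \<rho> by simp
  finally show "sum_list xs \<le> (\<rho>\<^sup>2 + (\<rho> - 1)) * (E + X * T)"
    unfolding sum_list split using tail by (simp add: power2_eq_square algebra_simps)
qed

section \<open>Fibonacci windows and logarithms\<close>

lemma pow2_le_fib: "2 ^ k \<le> fib (2 * k + 1)"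
proof (induction k)
  case (Suc k)
  have "fib (2 * Suc k + 1) = fib (2 * k + 2) + fib (2 * k + 1)"
    by (simp add: numeral_eq_Suc)
  moreover have "fib (2 * k + 1) \<le> fib (2 * k + 2)" by (rule fib_mono) simp
  ultimately show ?case using Suc by simp
qed simp

lemma less_fib_log:
  fixes x :: real
  assumes "0 \<le> x"
  shows "x < real (fib (2 * (nat \<lceil>log 2 (max 1 x)\<rceil> + 1) + 1))"
proof -
  define k where "k = nat \<lceil>log 2 (max 1 x)\<rceil> + 1"
  have "log 2 (max 1 x) + 1 \<le> real k" unfolding k_def by linarith
  hence "2 powr (log 2 (max 1 x) + 1) \<le> 2 powr real k" by (intro powr_mono) auto
  hence "2 * max 1 x \<le> 2 powr real k" by (simp add: powr_add)
  also have "\<dots> = real (2 ^ k)" by (simp add: powr_realpow)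
  also have "\<dots> \<le> real (fib (2 * k + 1))" using pow2_le_fib[of k] by (simp only: of_nat_le_iff)
  finally show ?thesis unfolding k_def using assms by linarith
qed

lemma le_power_ceiling_log:
  fixes \<rho> y :: real
  assumes "1 < \<rho>" "0 < y"
  shows "y \<le> \<rho> ^ nat \<lceil>ln y / ln \<rho>\<rceil>"
proof -
  have "ln y / ln \<rho> \<le> real (nat \<lceil>ln y / ln \<rho>\<rceil>)" by linarith
  hence "ln y \<le> real (nat \<lceil>ln y / ln \<rho>\<rceil>) * ln \<rho>" using assms by (simp add: divide_le_eq)
  also have "\<dots> = ln (\<rho> ^ nat \<lceil>ln y / ln \<rho>\<rceil>)" using assms by (simp add: ln_realpow)
  finally show ?thesis using assms by (subst (asm) ln_le_cancel_iff) auto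
qed

lemma less_power_if_log_less:
  fixes \<rho> y :: real
  assumes "1 < \<rho>" "0 < y" "ln y / ln \<rho> < real k"
  shows "y < \<rho> ^ k"
proof -
  have "ln y < real k * ln \<rho>" using assms by (simp add: divide_less_eq)
  also have "\<dots> = ln (\<rho> ^ k)" using assms by (simp add: ln_realpow)
  finally show ?thesis using assms by (subst (asm) ln_less_cancel_iff) auto
qed

lemma half_le_ln_one_plus:
  fixes g :: real
  assumes "0 \<le> g" "g \<le> 1/2"
  shows "g / 2 \<le> ln (1 + g)"
proof -
  have "g - g\<^sup>2 \<le> ln (1 + g)" using ln_one_plus_pos_lower_bound[of g] assms by simp
  moreover have "g * (2 * g) \<le> g * 1" using assms by (intro mult_left_mono) auto
  hence "g / 2 \<le> g - g\<^sup>2" by (simp add: power2_eq_square)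
  ultimately show ?thesis by simp
qed

lemma ln_le_log2: "(1::real) \<le> y \<Longrightarrow> ln y \<le> log 2 y"
proof -
  assume y: "1 \<le> y"
  have "ln y * ln 2 \<le> ln y" using y ln_2_less_1 by (simp add: mult_left_le)
  thus ?thesis unfolding log_def using y by (simp add: le_divide_eq)
qed

definition fib_window :: "real \<Rightarrow> nat \<Rightarrow> real \<Rightarrow> real \<Rightarrow> bool" where
  "fib_window \<rho> j a b \<longleftrightarrow> 1 \<le> j \<and> a = \<rho> ^ fib j \<and> b = \<rho> ^ fib (j - 1)"

lemma fib_window_up: "fib_window \<rho> j a b \<Longrightarrow> fib_window \<rho> (Suc j) (a * b) a"
  unfolding fib_window_def by (cases j rule: fib.cases) (auto simp: power_add)

lemma fib_window_down1:
  "fib_window \<rho> (Suc (Suc (Suc i))) a b \<Longrightarrow> 0 < \<rho> \<Longrightarrow> fib_window \<rho> (Suc (Suc i)) b (a / b)"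
  unfolding fib_window_def by (simp add: power_add)

lemma fib_window_down2:
  "fib_window \<rho> (Suc (Suc (Suc i))) a b \<Longrightarrow> 0 < \<rho> \<Longrightarrow> fib_window \<rho> (Suc i) (a / b) (b / (a / b))"
  unfolding fib_window_def by (simp add: power_add)

lemma fib_window_large:
  assumes "fib_window \<rho> j a b" "1 < \<rho>" "\<rho> < a"
  obtains i where "j = Suc (Suc (Suc i))"
proof -
  have "\<not> fib j \<le> 1"
  proof
    assume "fib j \<le> 1"
    hence "\<rho> ^ fib j \<le> \<rho> ^ 1" using assms(2) by (intro power_increasing) auto
    thus False using assms unfolding fib_window_def by simp
  qed
  moreover have "fib j \<le> 1" if "j \<le> 2" using that by (auto simp: le_Suc_eq numeral_2_eq_2)
  ultimately have "j = Suc (Suc (Suc (j - 3)))" by linarith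
  thus ?thesis by (rule that)
qed

lemma fib_window_small:
  assumes "fib_window \<rho> j a b" "1 < \<rho>" "a \<le> \<rho>"
  shows "a = \<rho>"
proof -
  have "\<rho> ^ fib j \<le> \<rho> ^ 1" using assms unfolding fib_window_def by simp
  hence "fib j \<le> 1" using assms(2) power_le_imp_le_exp by blast
  moreover have "0 < fib j" using assms(1) fib_neq_0_nat unfolding fib_window_def by simp
  ultimately have "fib j = 1" by linarith
  thus ?thesis using assms(1) unfolding fib_window_def by simp
qed

section \<open>The program\<close>

definition slack :: "real \<Rightarrow> real" where
  "slack \<epsilon> = (if \<epsilon> \<le> 1 then \<epsilon> / 4 else 1 / 4)"

lemma slack_pos: "0 < \<epsilon> \<Longrightarrow> 0 < slack \<epsilon>"
  by (simp add: slack_def)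

lemma slack_le_quarter: "slack \<epsilon> \<le> 1 / 4"
  by (simp add: slack_def)

lemma slack_le: "0 < \<epsilon> \<Longrightarrow> slack \<epsilon> \<le> \<epsilon> / 4"
  by (simp add: slack_def)

lemma inverse_slack_le: "0 < \<epsilon> \<Longrightarrow> 1 / slack \<epsilon> \<le> 4 * (1 + 1 / \<epsilon>)"
  unfolding slack_def by (auto simp: field_simps)

text \<open>Registers: 0 holds \<open>n\<close> and finally the output, 1 holds \<open>\<epsilon>\<close>, 2 the constant 0, 3 the
  constant 1, 4 the slack \<open>g\<close>, 5 the ratio \<open>\<rho> = 1 + g\<close> and 21 the base \<open>n + 1\<close> of rank queries.
  If \<open>n g < 1\<close> the list is summed exactly (from address 11, with index 8 and partial sum 9).
  Otherwise, after reading the maximum \<open>T0\<close> (address 20; output 0 at 72 if it is 0), the window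
  \<open>(\<rho> ^ fib j, \<rho> ^ fib (j - 1))\<close> in registers 10, 11 is grown until \<open>\<rho> ^ fib j > n\<close> (address 24)
  and saved in 12, 13. Each level (address 34) runs a Fibonacci search over the window (address 36)
  for a count estimate \<open>X\<close> (register 14) at the threshold \<open>T\<close> (register 15), adds the layer
  estimate to \<open>E\<close> (register 16), and stops (address 53) with the candidate \<open>E + X T\<close> (register 17)
  once the entries below \<open>T\<close> are negligible; the output \<open>(1 + \<epsilon>) (E + X T)\<close> is written at 69.
  Registers 6, 7, 18, 19, 20 are scratch; \<open>JmpLe 2 2 t\<close> is an unconditional jump.\<close>

definition approx_sum_prog :: prog where
  "approx_sum_prog = [Const 2 0, Const 3 1, Const 6 4, JmpLe 1 3 6, Dvd 4 3 6, JmpLe 2 2 7,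
    Dvd 4 1 6, Add 5 3 4, Mul 6 0 4, Add 21 0 3, JmpLe 3 6 20,
    Const 8 1, Const 9 0, JmpLe 21 8 18, Qry 19 8, Add 9 9 19, Add 8 8 3, JmpLe 2 2 13,
    Add 0 9 2, Halt,
    Qry 15 0, JmpLe 15 2 72, Add 10 5 2, Const 11 1,
    JmpLe 10 0 26, JmpLe 2 2 30, Add 6 10 2, Mul 10 10 11, Add 11 6 2, JmpLe 2 2 24,
    Add 12 10 2, Add 13 11 2, Const 14 1, Const 16 0,
    Add 10 12 2, Add 11 13 2,
    JmpLe 10 5 53, Mul 18 14 11, Sub 6 2 18, Flr 6 6, Add 6 21 6, Qry 19 6, JmpLe 15 19 47,
    Dvd 6 10 11, Add 10 11 2, Add 11 6 2, JmpLe 2 2 36,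
    Add 14 18 2, Dvd 6 10 11, Dvd 7 11 6, Add 10 6 2, Add 11 7 2, JmpLe 2 2 36,
    Mul 6 14 15, Dvd 7 6 5, Mul 20 7 4, Add 16 16 20, Add 17 16 7, Mul 18 14 5, Sub 6 2 18,
    Flr 6 6, Add 6 21 6, Qry 19 6, JmpLe 19 2 69, Mul 6 0 15, Mul 7 4 17, JmpLe 6 7 69,
    Dvd 15 15 5, JmpLe 2 2 34,
    Add 6 3 1, Mul 0 6 17, Halt,
    Const 0 0, Halt]"

lemma approx_sum_prog_length: "length approx_sum_prog = 74"
  by (simp add: approx_sum_prog_def)

lemmas approx_sum_prog_nth = arg_cong[where f = "\<lambda>p. p ! n" for n, OF approx_sum_prog_def]

definition steps :: "real list \<Rightarrow> nat \<Rightarrow> state \<Rightarrow> state" where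
  "steps xs k s = (step approx_sum_prog xs ^^ k) s"

lemma steps_0 [simp]: "steps xs 0 s = s"
  by (simp add: steps_def)

lemma steps_Suc: "steps xs (Suc k) s = steps xs k (step approx_sum_prog xs s)"
  by (simp add: steps_def funpow_Suc_right del: funpow.simps)

lemma steps_add: "steps xs (a + b) s = steps xs b (steps xs a s)"
  unfolding steps_def by (metis add.commute comp_apply funpow_add)

lemma steps_numeral: "steps xs (numeral k) s = steps xs (pred_numeral k) (step approx_sum_prog xs s)"
  by (simp add: numeral_eq_Suc steps_Suc)

lemma run_eq_steps: "run approx_sum_prog xs \<epsilon> t = steps xs t (init (length xs) \<epsilon>)"
  by (simp add: run_def steps_def)

lemmas exec_simps = steps_numeral steps_Suc step_def halted_def
  approx_sum_prog_length approx_sum_prog_nth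

definition fixed_regs :: "real list \<Rightarrow> real \<Rightarrow> (nat \<Rightarrow> real) \<Rightarrow> bool" where
  "fixed_regs xs \<epsilon> r \<longleftrightarrow> r 0 = real (length xs) \<and> r 1 = \<epsilon> \<and> r 2 = 0 \<and> r 3 = 1
     \<and> r 4 = slack \<epsilon> \<and> r 5 = 1 + slack \<epsilon> \<and> r 21 = real (length xs) + 1"

lemma fixed_regs_update:
  assumes "fixed_regs xs \<epsilon> r" "\<forall>i. i \<notin> S \<longrightarrow> r' i = r i" "S \<inter> {0, 1, 2, 3, 4, 5, 21} = {}"
  shows "fixed_regs xs \<epsilon> r'"
proof -
  have "r' i = r i" if "i \<in> {0, 1, 2, 3, 4, 5, 21}" for i using assms(2,3) that by blast
  thus ?thesis using assms(1) unfolding fixed_regs_def by simp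
qed

lemma steps_init:
  "\<exists>k r. k \<le> 10 \<and> fixed_regs xs \<epsilon> r
     \<and> steps xs k (init (length xs) \<epsilon>) = (if 1 \<le> real (length xs) * slack \<epsilon> then 20 else 11, r)"
proof (cases "\<epsilon> \<le> 1")
  case True
  hence "\<exists>r. fixed_regs xs \<epsilon> r
    \<and> steps xs 9 (init (length xs) \<epsilon>) = (if 1 \<le> real (length xs) * slack \<epsilon> then 20 else 11, r)"
    by (simp add: exec_simps init_def fixed_regs_def slack_def)
  thus ?thesis by (intro exI[of _ 9]) auto
next
  case False
  hence "\<exists>r. fixed_regs xs \<epsilon> r
    \<and> steps xs 10 (init (length xs) \<epsilon>) = (if 1 \<le> real (length xs) * slack \<epsilon> then 20 else 11, r)"
    by (simp add: exec_simps init_def fixed_regs_def slack_def)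
  thus ?thesis by (intro exI[of _ 10]) auto
qed

lemma steps_exact_start: "steps xs 2 (11, r) = (13, r(8 := 1, 9 := 0))"
  by (simp add: exec_simps)

lemma steps_exact_loop:
  assumes "fixed_regs xs \<epsilon> r" "r 8 = real i" "r 9 = (\<Sum>j<i - 1. xs ! j)" "1 \<le> i" "i \<le> length xs + 1"
  shows "\<exists>k r'. k \<le> 5 * (length xs + 1 - i) + 2 \<and> steps xs k (13, r) = (19, r') \<and> r' 0 = sum_list xs"
  using assms
proof (induction "length xs + 1 - i" arbitrary: i r)
  case 0
  hence "i = length xs + 1" by simp
  hence "steps xs 2 (13, r) = (19, r(0 := r 9 + r 2))" and "r 9 + r 2 = sum_list xs"
    using 0 by (simp_all add: exec_simps fixed_regs_def sum_list_sum_nth atLeast0LessThan)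
  thus ?case by (intro exI[of _ 2]) auto
next
  case (Suc d)
  hence i: "i \<le> length xs" by simp
  define r' where "r' = r(19 := xs ! (i - 1), 9 := r 9 + xs ! (i - 1), 8 := r 8 + r 3)"
  have "steps xs 5 (13, r) = (13, r')"
    using Suc.prems i unfolding r'_def by (simp add: exec_simps fixed_regs_def query_of_nat)
  moreover have r': "fixed_regs xs \<epsilon> r'" "r' 8 = real (Suc i)" "r' 9 = (\<Sum>j<Suc i - 1. xs ! j)"
    using Suc.prems unfolding r'_def fixed_regs_def by (cases i; simp)+
  obtain k r'' where "k \<le> 5 * (length xs + 1 - Suc i) + 2"
    "steps xs k (13, r') = (19, r'')" "r'' 0 = sum_list xs"
    using Suc.hyps(1)[OF _ r'] Suc.hyps(2) i by fastforce
  ultimately show ?case using i by (intro exI[of _ "5 + k"] exI[of _ r'']) (auto simp: steps_add)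
qed

lemma steps_max_zero: "query xs (r 0) \<le> r 2 \<Longrightarrow> \<exists>r'. steps xs 3 (20, r) = (73, r') \<and> r' 0 = 0"
  by (simp add: exec_simps)

lemma steps_max_pos: "\<not> query xs (r 0) \<le> r 2 \<Longrightarrow>
  \<exists>r'. steps xs 4 (20, r) = (24, r') \<and> r' 15 = query xs (r 0) \<and> r' 10 = r 5 + r 2 \<and> r' 11 = 1
    \<and> (\<forall>i. i \<notin> {10, 11, 15} \<longrightarrow> r' i = r i)"
  by (simp add: exec_simps)

lemma steps_window_grow: "r 10 \<le> r 0 \<Longrightarrow>
  \<exists>r'. steps xs 5 (24, r) = (24, r') \<and> r' 10 = r 10 * r 11 \<and> r' 11 = r 10 + r 2 + r 2
    \<and> (\<forall>i. i \<notin> {6, 10, 11} \<longrightarrow> r' i = r i)"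
  by (simp add: exec_simps)

lemma steps_window_done: "\<not> r 10 \<le> r 0 \<Longrightarrow> steps xs 2 (24, r) = (30, r)"
  by (simp add: exec_simps)

lemma steps_levels_setup:
  "\<exists>r'. steps xs 4 (30, r) = (34, r') \<and> r' 12 = r 10 + r 2 \<and> r' 13 = r 11 + r 2
    \<and> r' 14 = 1 \<and> r' 16 = 0 \<and> (\<forall>i. i \<notin> {12, 13, 14, 16} \<longrightarrow> r' i = r i)"
  by (simp add: exec_simps)

lemma steps_level_start:
  "\<exists>r'. steps xs 2 (34, r) = (36, r') \<and> r' 10 = r 12 + r 2 \<and> r' 11 = r 13 + r 2
    \<and> (\<forall>i. i \<notin> {10, 11} \<longrightarrow> r' i = r i)"
  by (simp add: exec_simps)

lemma steps_search_done: "r 10 \<le> r 5 \<Longrightarrow> steps xs 1 (36, r) = (53, r)"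
  by (simp add: exec_simps)

lemma steps_search_up:
  "\<not> r 10 \<le> r 5 \<Longrightarrow> r 15 \<le> query xs (r 21 + of_int \<lfloor>r 2 - r 14 * r 11\<rfloor>) \<Longrightarrow>
  \<exists>r'. steps xs 13 (36, r) = (36, r') \<and> r' 14 = r 14 * r 11 + r 2 \<and> r' 10 = r 10 / r 11 + r 2
    \<and> r' 11 = r 11 / (r 10 / r 11) + r 2 \<and> (\<forall>i. i \<notin> {6, 7, 10, 11, 14, 18, 19} \<longrightarrow> r' i = r i)"
  by (simp add: exec_simps)

lemma steps_search_down:
  "\<not> r 10 \<le> r 5 \<Longrightarrow> \<not> r 15 \<le> query xs (r 21 + of_int \<lfloor>r 2 - r 14 * r 11\<rfloor>) \<Longrightarrow>
  \<exists>r'. steps xs 11 (36, r) = (36, r') \<and> r' 14 = r 14 \<and> r' 10 = r 11 + r 2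
    \<and> r' 11 = r 10 / r 11 + r 2 \<and> (\<forall>i. i \<notin> {6, 7, 10, 11, 14, 18, 19} \<longrightarrow> r' i = r i)"
  by (simp add: exec_simps)

lemma steps_stop_all_counted:
  "query xs (r 21 + of_int \<lfloor>r 2 - r 14 * r 5\<rfloor>) \<le> r 2 \<Longrightarrow>
  \<exists>r'. steps xs 11 (53, r) = (69, r') \<and> r' 17 = r 16 + r 14 * r 15 / r 5 * r 4 + r 14 * r 15 / r 5
    \<and> (\<forall>i. i \<notin> {6, 7, 16, 17, 18, 19, 20} \<longrightarrow> r' i = r i)"
  by (simp add: exec_simps)

lemma steps_stop_tail_small:
  "\<not> query xs (r 21 + of_int \<lfloor>r 2 - r 14 * r 5\<rfloor>) \<le> r 2 \<Longrightarrow>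
  r 0 * r 15 \<le> r 4 * (r 16 + r 14 * r 15 / r 5 * r 4 + r 14 * r 15 / r 5) \<Longrightarrow>
  \<exists>r'. steps xs 14 (53, r) = (69, r') \<and> r' 17 = r 16 + r 14 * r 15 / r 5 * r 4 + r 14 * r 15 / r 5
    \<and> (\<forall>i. i \<notin> {6, 7, 16, 17, 18, 19, 20} \<longrightarrow> r' i = r i)"
  by (simp add: exec_simps)

lemma steps_next_level:
  "\<not> query xs (r 21 + of_int \<lfloor>r 2 - r 14 * r 5\<rfloor>) \<le> r 2 \<Longrightarrow>
  \<not> r 0 * r 15 \<le> r 4 * (r 16 + r 14 * r 15 / r 5 * r 4 + r 14 * r 15 / r 5) \<Longrightarrow>
  \<exists>r'. steps xs 16 (53, r) = (34, r') \<and> r' 15 = r 15 / r 5 \<and> r' 16 = r 16 + r 14 * r 15 / r 5 * r 4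
    \<and> (\<forall>i. i \<notin> {6, 7, 15, 16, 17, 18, 19, 20} \<longrightarrow> r' i = r i)"
  by (simp add: exec_simps)

lemma steps_output: "steps xs 2 (69, r) = (71, r(6 := r 3 + r 1, 0 := (r 3 + r 1) * r 17))"
  by (simp add: exec_simps)

section \<open>Fibonacci search and the window\<close>

definition search_inv :: "real list \<Rightarrow> real \<Rightarrow> real \<Rightarrow> nat \<Rightarrow> (nat \<Rightarrow> real) \<Rightarrow> bool" where
  "search_inv xs \<epsilon> T j r \<longleftrightarrow> fixed_regs xs \<epsilon> r \<and> r 15 = T
     \<and> fib_window (1 + slack \<epsilon>) j (r 10) (r 11)
     \<and> 1 \<le> r 14 \<and> r 14 \<le> count_ge xs T \<and> count_ge xs T < r 14 * (1 + slack \<epsilon>) ^ fib j"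

text \<open>The probe \<open>X \<rho> ^ fib (j - 1)\<close> splits the uncertainty \<open>\<rho> ^ fib j = \<rho> ^ fib (j - 1) \<rho> ^ fib (j - 2)\<close>
  of the estimate \<open>X\<close>: the window moves down by two indices if the probe succeeds and by one if it fails.\<close>

lemma search_step:
  assumes sorted: "sorted xs" and "0 < \<epsilon>" "0 < T"
    and inv: "search_inv xs \<epsilon> T j r" and large: "\<not> r 10 \<le> r 5"
  shows "\<exists>k j' r'. k \<le> 13 \<and> j' < j \<and> steps xs k (36, r) = (36, r') \<and> search_inv xs \<epsilon> T j' r'
    \<and> (\<forall>i. i \<notin> {6, 7, 10, 11, 14, 18, 19} \<longrightarrow> r' i = r i)"
proof -
  define \<rho> where "\<rho> = 1 + slack \<epsilon>"
  have \<rho>: "1 < \<rho>" unfolding \<rho>_def using slack_pos[OF \<open>0 < \<epsilon>\<close>] by simp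
  have regs: "r 2 = 0" "r 5 = \<rho>" "r 15 = T" "r 21 = real (length xs) + 1"
    and window: "fib_window \<rho> j (r 10) (r 11)" and X: "1 \<le> r 14" "r 14 \<le> count_ge xs T"
    and count: "count_ge xs T < r 14 * \<rho> ^ fib j"
    using inv unfolding search_inv_def fixed_regs_def \<rho>_def by auto
  obtain i where j: "j = Suc (Suc (Suc i))"
    using fib_window_large[OF window \<rho>] large regs by force
  have r11: "r 11 = \<rho> ^ fib (Suc (Suc i))" using window unfolding fib_window_def j by simp
  define y where "y = r 14 * r 11"
  have "1 \<le> y" unfolding y_def r11 using X \<rho> by (simp add: one_le_power order.trans[OF _ mult_right_mono[of 1]])
  hence query: "r 15 \<le> query xs (r 21 + of_int \<lfloor>r 2 - r 14 * r 11\<rfloor>) \<longleftrightarrow> y \<le> count_ge xs T"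
    using query_count_ge_iff[OF sorted \<open>0 < T\<close>] regs unfolding y_def by simp
  have fixed: "fixed_regs xs \<epsilon> r'" if "\<forall>i. i \<notin> {6, 7, 10, 11, 14, 18, 19} \<longrightarrow> r' i = r i" for r'
    using fixed_regs_update[OF _ that] inv unfolding search_inv_def by simp
  have count_y: "count_ge xs T < y * \<rho> ^ fib (Suc i)"
    using count unfolding y_def r11 j by (simp add: power_add mult.assoc)
  show ?thesis
  proof (cases "y \<le> count_ge xs T")
    case True
    then obtain r' where r': "steps xs 13 (36, r) = (36, r')" "r' 14 = y" "r' 10 = r 10 / r 11"
      "r' 11 = r 11 / (r 10 / r 11)" "\<forall>i. i \<notin> {6, 7, 10, 11, 14, 18, 19} \<longrightarrow> r' i = r i"
      using steps_search_up[OF large, of xs] query regs unfolding y_def by auto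
    have "search_inv xs \<epsilon> T (Suc i) r'"
      unfolding search_inv_def \<rho>_def[symmetric]
      using fixed[OF r'(5)] r' regs fib_window_down2[OF window[unfolded j]] \<rho> True \<open>1 \<le> y\<close> count_y
      by simp
    thus ?thesis using r' j by (intro exI[of _ 13] exI[of _ "Suc i"] exI[of _ r']) auto
  next
    case False
    then obtain r' where r': "steps xs 11 (36, r) = (36, r')" "r' 14 = r 14" "r' 10 = r 11"
      "r' 11 = r 10 / r 11" "\<forall>i. i \<notin> {6, 7, 10, 11, 14, 18, 19} \<longrightarrow> r' i = r i"
      using steps_search_down[OF large, of xs] query regs unfolding y_def by auto
    have "search_inv xs \<epsilon> T (Suc (Suc i)) r'"
      unfolding search_inv_def \<rho>_def[symmetric]
      using fixed[OF r'(5)] r' regs fib_window_down1[OF window[unfolded j]] \<rho> False X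
      unfolding y_def r11 by simp
    thus ?thesis using r' j by (intro exI[of _ 11] exI[of _ "Suc (Suc i)"] exI[of _ r']) auto
  qed
qed

lemma fib_search:
  assumes sorted: "sorted xs" and "0 < \<epsilon>" "0 < T"
  shows "search_inv xs \<epsilon> T j r \<Longrightarrow> \<exists>k r'. k \<le> 13 * j \<and> steps xs k (36, r) = (53, r')
    \<and> 1 \<le> r' 14 \<and> r' 14 \<le> count_ge xs T \<and> count_ge xs T < r' 14 * (1 + slack \<epsilon>)
    \<and> (\<forall>i. i \<notin> {6, 7, 10, 11, 14, 18, 19} \<longrightarrow> r' i = r i)"
proof (induction j arbitrary: r rule: less_induct)
  case (less j r)
  have \<rho>: "1 < 1 + slack \<epsilon>" using slack_pos[OF \<open>0 < \<epsilon>\<close>] by simp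
  show ?case
  proof (cases "r 10 \<le> r 5")
    case True
    have "r 10 = 1 + slack \<epsilon>" "1 \<le> j"
      using fib_window_small[OF _ \<rho>] True less.prems
      unfolding search_inv_def fixed_regs_def fib_window_def by auto
    thus ?thesis using steps_search_done[OF True, of xs] less.prems
      unfolding search_inv_def fib_window_def by (intro exI[of _ 1] exI[of _ r]) auto
  next
    case False
    then obtain k j' r' where step: "k \<le> 13" "j' < j" "steps xs k (36, r) = (36, r')"
      "search_inv xs \<epsilon> T j' r'" "\<forall>i. i \<notin> {6, 7, 10, 11, 14, 18, 19} \<longrightarrow> r' i = r i"
      using search_step[OF assms less.prems] by blast
    obtain k' r'' where rest: "k' \<le> 13 * j'" "steps xs k' (36, r') = (53, r'')"
      "1 \<le> r'' 14" "r'' 14 \<le> count_ge xs T" "count_ge xs T < r'' 14 * (1 + slack \<epsilon>)"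
      "\<forall>i. i \<notin> {6, 7, 10, 11, 14, 18, 19} \<longrightarrow> r'' i = r' i"
      using less.IH[OF step(2,4)] by blast
    have "k + k' \<le> 13 * j" using step(1,2) rest(1) by linarith
    thus ?thesis using step rest by (intro exI[of _ "k + k'"] exI[of _ r'']) (auto simp: steps_add)
  qed
qed

lemma window_grow:
  assumes "0 < \<epsilon>" and \<rho>: "\<rho> = 1 + slack \<epsilon>" and Jb: "real (length xs) < \<rho> ^ fib Jb"
  shows "fixed_regs xs \<epsilon> r \<Longrightarrow> fib_window \<rho> j (r 10) (r 11) \<Longrightarrow> j \<le> Jb \<Longrightarrow>
    \<exists>k r' J. k \<le> 5 * (Jb - j) + 2 \<and> steps xs k (24, r) = (30, r') \<and> fib_window \<rho> J (r' 10) (r' 11)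
      \<and> J \<le> Jb \<and> real (length xs) < \<rho> ^ fib J \<and> (\<forall>i. i \<notin> {6, 10, 11} \<longrightarrow> r' i = r i)"
proof (induction "Jb - j" arbitrary: j r)
  case 0
  hence "j = Jb" by simp
  hence "\<not> r 10 \<le> r 0" using 0 Jb unfolding fixed_regs_def fib_window_def by simp
  hence "steps xs 2 (24, r) = (30, r)" by (rule steps_window_done)
  moreover have "real (length xs) < \<rho> ^ fib j" using Jb \<open>j = Jb\<close> by simp
  ultimately show ?case using 0 le_add2 by blast
next
  case (Suc d)
  show ?case
  proof (cases "r 10 \<le> r 0")
    case False
    hence "steps xs 2 (24, r) = (30, r)" by (rule steps_window_done)
    moreover have "real (length xs) < \<rho> ^ fib j"
      using Suc.prems False unfolding fixed_regs_def fib_window_def by simp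
    ultimately show ?thesis using Suc.prems le_add2 by blast
  next
    case True
    obtain r' where r': "steps xs 5 (24, r) = (24, r')" "r' 10 = r 10 * r 11" "r' 11 = r 10"
      "\<forall>i. i \<notin> {6, 10, 11} \<longrightarrow> r' i = r i"
      using steps_window_grow[OF True, of xs] Suc.prems(1) unfolding fixed_regs_def by auto
    have fixed: "fixed_regs xs \<epsilon> r'" using fixed_regs_update[OF Suc.prems(1) r'(4)] by simp
    have window: "fib_window \<rho> (Suc j) (r' 10) (r' 11)"
      using fib_window_up[OF Suc.prems(2)] r' by simp
    have "d = Jb - Suc j" "Suc j \<le> Jb" using Suc.hyps(2) by simp_all
    from Suc.hyps(1)[OF this(1) fixed window this(2)]
    obtain k r'' J where rest: "k \<le> 5 * (Jb - Suc j) + 2" "steps xs k (24, r') = (30, r'')"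
      "fib_window \<rho> J (r'' 10) (r'' 11)" "J \<le> Jb" "real (length xs) < \<rho> ^ fib J"
      "\<forall>i. i \<notin> {6, 10, 11} \<longrightarrow> r'' i = r' i"
      by blast
    have "5 + k \<le> 5 * (Jb - j) + 2" using rest(1) \<open>Suc j \<le> Jb\<close> by simp
    moreover have "steps xs (5 + k) (24, r) = (30, r'')" using r'(1) rest(2) by (simp add: steps_add)
    moreover have "\<forall>i. i \<notin> {6, 10, 11} \<longrightarrow> r'' i = r i" using r'(4) rest(6) by simp
    ultimately show ?thesis using rest(3-5) by blast
  qed
qed

section \<open>Levels\<close>

definition layer_estimate :: "real list \<Rightarrow> real \<Rightarrow> real \<Rightarrow> nat \<Rightarrow> real \<Rightarrow> bool" where
  "layer_estimate xs g T0 m E \<longleftrightarrow> 0 \<le> E \<and> E \<le> layer_sum xs T0 (1 + g) m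
     \<and> layer_sum xs T0 (1 + g) m \<le> (1 + g) * E \<and> (1 \<le> m \<longrightarrow> g * T0 / (1 + g) \<le> E)"

lemma layer_estimate_0: "layer_estimate xs g T0 0 0"
  by (simp add: layer_estimate_def layer_sum_def)

lemma layer_estimate_Suc:
  assumes est: "layer_estimate xs g T0 m E" and g: "0 < g" and "0 < T0"
    and T: "T = threshold T0 (1 + g) m"
    and X: "1 \<le> X" "X \<le> count_ge xs T" "count_ge xs T < X * (1 + g)"
  shows "layer_estimate xs g T0 (Suc m) (E + X * T / (1 + g) * g)"
proof -
  define \<rho> where "\<rho> = 1 + g"
  have \<rho>: "1 < \<rho>" unfolding \<rho>_def using g by simp
  have "0 < T" unfolding T \<rho>_def[symmetric] using threshold_pos[OF \<open>0 < T0\<close> \<rho>] .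
  have layer: "layer_sum xs T0 \<rho> (Suc m) = layer_sum xs T0 \<rho> m + count_ge xs T * T * (g / \<rho>)"
    unfolding layer_sum_Suc T \<rho>_def by simp
  have gain_nonneg: "0 \<le> X * T / \<rho> * g" using X \<open>0 < T\<close> \<rho> g by simp
  have gain_le: "X * T / \<rho> * g \<le> count_ge xs T * T * (g / \<rho>)"
    using X \<open>0 < T\<close> \<rho> g by (simp add: mult_right_mono divide_right_mono)
  have "count_ge xs T * T * (g / \<rho>) \<le> (X * \<rho>) * T * (g / \<rho>)"
    using X \<open>0 < T\<close> \<rho> g unfolding \<rho>_def by (intro mult_right_mono) auto
  hence gain_ge: "count_ge xs T * T * (g / \<rho>) \<le> \<rho> * (X * T / \<rho> * g)" by simp
  have "g * T0 / \<rho> \<le> E + X * T / \<rho> * g"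
  proof (cases m)
    case 0
    hence "T = T0" unfolding T threshold_def by simp
    hence "g * T0 / \<rho> \<le> X * T / \<rho> * g" using X \<open>0 < T0\<close> \<rho> g
      by (simp add: divide_right_mono mult_right_mono)
    thus ?thesis using est unfolding layer_estimate_def by simp
  next
    case (Suc m')
    thus ?thesis using est gain_nonneg unfolding layer_estimate_def \<rho>_def by simp
  qed
  thus ?thesis using est gain_nonneg gain_le gain_ge
    unfolding layer_estimate_def layer \<rho>_def[symmetric] by (simp add: algebra_simps)
qed

definition levels_suffice :: "real list \<Rightarrow> real \<Rightarrow> real \<Rightarrow> nat \<Rightarrow> bool" where
  "levels_suffice xs g T0 m \<longleftrightarrow> (\<forall>x\<in>set xs. 0 < x \<longrightarrow> threshold T0 (1 + g) m \<le> x)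
     \<or> (1 \<le> m \<and> real (length xs) * threshold T0 (1 + g) m \<le> g * (g * T0 / (1 + g)))"

lemma not_levels_suffice:
  assumes g: "0 < g" and "0 < T0" and T: "T = threshold T0 (1 + g) m"
    and est: "layer_estimate xs g T0 m E" and X: "0 \<le> X" "count_ge xs T < X * (1 + g)"
    and counted: "X * (1 + g) \<le> count_pos xs" and large: "g * (E + X * T) < real (length xs) * T"
  shows "\<not> levels_suffice xs g T0 m"
proof
  have "0 < T" unfolding T using threshold_pos[OF \<open>0 < T0\<close>] g by simp
  assume "levels_suffice xs g T0 m"
  thus False unfolding levels_suffice_def T[symmetric]
  proof
    assume "\<forall>x\<in>set xs. 0 < x \<longrightarrow> T \<le> x"
    hence "{j. j < length xs \<and> 0 < xs ! j} = {j. j < length xs \<and> T \<le> xs ! j}"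
      using \<open>0 < T\<close> by (auto simp: nth_mem)
    hence "count_pos xs = count_ge xs T" unfolding count_pos_def count_ge_def by simp
    thus False using X counted by simp
  next
    assume small: "1 \<le> m \<and> real (length xs) * T \<le> g * (g * T0 / (1 + g))"
    have "0 \<le> X * T" using X \<open>0 < T\<close> by simp
    hence "g * T0 / (1 + g) \<le> E + X * T"
      using small est unfolding layer_estimate_def by linarith
    hence "g * (g * T0 / (1 + g)) \<le> g * (E + X * T)" using g by (intro mult_left_mono) auto
    thus False using small large by linarith
  qed
qed

lemma tail_sum_le_of_counted:
  assumes nonneg: "\<forall>x\<in>set xs. 0 \<le> x" and "0 < T" "0 \<le> E" "0 \<le> g"
    and X: "X \<le> count_ge xs T" and counted: "count_pos xs < X * (1 + g)"
  shows "tail_sum xs T \<le> g * (E + X * T)"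
proof -
  have "tail_sum xs T \<le> T * (count_pos xs - count_ge xs T)"
    by (rule tail_sum_le_count[OF nonneg \<open>0 < T\<close>])
  also have "\<dots> \<le> T * (X * (1 + g) - X)"
    using X counted \<open>0 < T\<close> by (intro mult_left_mono) auto
  also have "\<dots> = g * (X * T)" by (simp add: algebra_simps)
  also have "\<dots> \<le> g * (E + X * T)"
    using \<open>0 \<le> E\<close> \<open>0 \<le> g\<close> by (intro mult_left_mono) auto
  finally show ?thesis .
qed

definition halt_inv :: "real list \<Rightarrow> real \<Rightarrow> (nat \<Rightarrow> real) \<Rightarrow> bool" where
  "halt_inv xs \<epsilon> r \<longleftrightarrow> fixed_regs xs \<epsilon> r
     \<and> r 17 \<le> sum_list xs \<and> sum_list xs \<le> ((1 + slack \<epsilon>)\<^sup>2 + slack \<epsilon>) * r 17"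

lemma halt_inv_of_tail_small:
  assumes sorted: "sorted xs" and nonneg: "\<forall>x\<in>set xs. 0 \<le> x" and "0 < \<epsilon>" and "xs \<noteq> []"
    and T0: "T0 = xs ! (length xs - 1)" "0 < T0" and T: "T = threshold T0 (1 + slack \<epsilon>) m"
    and X: "X \<le> count_ge xs T" "count_ge xs T < X * (1 + slack \<epsilon>)"
    and est: "layer_estimate xs (slack \<epsilon>) T0 m E"
    and tail: "tail_sum xs T \<le> slack \<epsilon> * (E + X * T)"
    and r: "fixed_regs xs \<epsilon> r" "r 17 = E + X * T"
  shows "halt_inv xs \<epsilon> r"
proof -
  have \<rho>: "1 < 1 + slack \<epsilon>" using slack_pos[OF \<open>0 < \<epsilon>\<close>] by simp
  have X': "count_ge xs T \<le> (1 + slack \<epsilon>) * X" using X(2) by (simp add: mult.commute)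
  have E: "0 \<le> E" "E \<le> layer_sum xs T0 (1 + slack \<epsilon>) m" "layer_sum xs T0 (1 + slack \<epsilon>) m \<le> (1 + slack \<epsilon>) * E"
    using est unfolding layer_estimate_def by auto
  have tail': "tail_sum xs T \<le> (1 + slack \<epsilon> - 1) * (E + X * T)" using tail by simp
  note bounds = sum_list_between_estimates[OF sorted nonneg \<open>xs \<noteq> []\<close> T0 \<rho> T X(1) X' E tail']
  show ?thesis using bounds r unfolding halt_inv_def by simp
qed

lemma level_end:
  assumes sorted: "sorted xs" and nonneg: "\<forall>x\<in>set xs. 0 \<le> x" and "0 < \<epsilon>" and "xs \<noteq> []"
    and T0: "T0 = xs ! (length xs - 1)" "0 < T0"
    and fixed: "fixed_regs xs \<epsilon> r" and T: "r 15 = threshold T0 (1 + slack \<epsilon>) m"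
    and X: "1 \<le> r 14" "r 14 \<le> count_ge xs (r 15)" "count_ge xs (r 15) < r 14 * (1 + slack \<epsilon>)"
    and est: "layer_estimate xs (slack \<epsilon>) T0 m (r 16)"
  shows "\<exists>k r'. k \<le> 16 \<and> ((steps xs k (53, r) = (69, r') \<and> halt_inv xs \<epsilon> r')
    \<or> (steps xs k (53, r) = (34, r') \<and> r' 15 = r 15 / (1 + slack \<epsilon>)
       \<and> r' 16 = r 16 + r 14 * r 15 / (1 + slack \<epsilon>) * slack \<epsilon>
       \<and> (\<forall>i. i \<notin> {6, 7, 15, 16, 17, 18, 19, 20} \<longrightarrow> r' i = r i)
       \<and> \<not> levels_suffice xs (slack \<epsilon>) T0 m))"
proof -
  define g where "g = slack \<epsilon>"
  have g: "0 < g" unfolding g_def using slack_pos[OF \<open>0 < \<epsilon>\<close>] .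
  have "0 < r 15" unfolding T using threshold_pos[OF T0(2)] g g_def by simp
  have regs: "r 0 = real (length xs)" "r 2 = 0" "r 4 = g" "r 5 = 1 + g" "r 21 = real (length xs) + 1"
    using fixed unfolding fixed_regs_def g_def by auto
  define C where "C = r 16 + r 14 * r 15"
  have candidate: "r 16 + r 14 * r 15 / r 5 * r 4 + r 14 * r 15 / r 5 = C"
  proof -
    have "1 + g \<noteq> 0" using g by simp
    have "r 14 * r 15 / (1 + g) * g + r 14 * r 15 / (1 + g) = r 14 * r 15 / (1 + g) * (1 + g)"
      by (simp add: distrib_left)
    also have "\<dots> = r 14 * r 15" using \<open>1 + g \<noteq> 0\<close> by simp
    finally have "r 14 * r 15 / (1 + g) * g + r 14 * r 15 / (1 + g) = r 14 * r 15" .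
    thus ?thesis unfolding C_def regs by simp
  qed
  have "1 * 1 \<le> r 14 * (1 + g)" using X g by (intro mult_mono) auto
  hence counted: "query xs (r 21 + of_int \<lfloor>r 2 - r 14 * r 5\<rfloor>) \<le> r 2 \<longleftrightarrow> count_pos xs < r 14 * (1 + g)"
    using query_count_pos_iff[OF sorted] regs by (simp add: not_less[symmetric])
  have halt: "halt_inv xs \<epsilon> r'"
    if "tail_sum xs (r 15) \<le> g * C" "r' 17 = C" "\<forall>i. i \<notin> {6, 7, 16, 17, 18, 19, 20} \<longrightarrow> r' i = r i" for r'
    using halt_inv_of_tail_small[OF sorted nonneg \<open>0 < \<epsilon>\<close> \<open>xs \<noteq> []\<close> T0 T X(2,3) est]
      fixed_regs_update[OF fixed that(3)] that(1,2) unfolding g_def C_def by simp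
  consider (all_counted) "count_pos xs < r 14 * (1 + g)"
    | (tail_small) "\<not> count_pos xs < r 14 * (1 + g)" "r 0 * r 15 \<le> r 4 * C"
    | (next_level) "\<not> count_pos xs < r 14 * (1 + g)" "\<not> r 0 * r 15 \<le> r 4 * C"
    by blast
  thus ?thesis
  proof cases
    case all_counted
    then obtain r' where r': "steps xs 11 (53, r) = (69, r')" "r' 17 = C"
      "\<forall>i. i \<notin> {6, 7, 16, 17, 18, 19, 20} \<longrightarrow> r' i = r i"
      using steps_stop_all_counted[of xs r] counted candidate by auto
    have "tail_sum xs (r 15) \<le> g * C" unfolding C_def
      using tail_sum_le_of_counted[OF nonneg \<open>0 < r 15\<close> _ _ X(2) all_counted] est g
      unfolding layer_estimate_def by (simp add: mult.commute)
    thus ?thesis using halt r' by (intro exI[of _ 11] exI[of _ r']) auto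
  next
    case tail_small
    then obtain r' where r': "steps xs 14 (53, r) = (69, r')" "r' 17 = C"
      "\<forall>i. i \<notin> {6, 7, 16, 17, 18, 19, 20} \<longrightarrow> r' i = r i"
      using steps_stop_tail_small[of xs r] counted candidate by auto
    have "tail_sum xs (r 15) \<le> g * C"
      using tail_sum_le_length[OF nonneg, of "r 15"] \<open>0 < r 15\<close> tail_small regs by simp
    thus ?thesis using halt r' by (intro exI[of _ 14] exI[of _ r']) auto
  next
    case next_level
    then obtain r' where r': "steps xs 16 (53, r) = (34, r')" "r' 15 = r 15 / (1 + g)"
      "r' 16 = r 16 + r 14 * r 15 / (1 + g) * g"
      "\<forall>i. i \<notin> {6, 7, 15, 16, 17, 18, 19, 20} \<longrightarrow> r' i = r i"
      using steps_next_level[of xs r] counted candidate regs by auto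
    have "0 \<le> r 14" "count_ge xs (r 15) < r 14 * (1 + g)" "r 14 * (1 + g) \<le> count_pos xs"
      "g * (r 16 + r 14 * r 15) < real (length xs) * r 15"
      using X next_level regs unfolding C_def g_def by auto
    hence "\<not> levels_suffice xs g T0 m"
      by (rule not_levels_suffice[OF g T0(2) T[folded g_def] est[folded g_def]])
    thus ?thesis using r' unfolding g_def by (intro exI[of _ 16] exI[of _ r']) auto
  qed
qed

definition level_inv :: "real list \<Rightarrow> real \<Rightarrow> real \<Rightarrow> nat \<Rightarrow> nat \<Rightarrow> (nat \<Rightarrow> real) \<Rightarrow> bool" where
  "level_inv xs \<epsilon> T0 J m r \<longleftrightarrow> fixed_regs xs \<epsilon> r
     \<and> fib_window (1 + slack \<epsilon>) J (r 12) (r 13) \<and> real (length xs) < (1 + slack \<epsilon>) ^ fib J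
     \<and> r 15 = threshold T0 (1 + slack \<epsilon>) m \<and> 1 \<le> r 14 \<and> r 14 \<le> count_ge xs (r 15)
     \<and> layer_estimate xs (slack \<epsilon>) T0 m (r 16)"

lemma one_level:
  assumes sorted: "sorted xs" and nonneg: "\<forall>x\<in>set xs. 0 \<le> x" and "0 < \<epsilon>" and "xs \<noteq> []"
    and T0: "T0 = xs ! (length xs - 1)" "0 < T0" and inv: "level_inv xs \<epsilon> T0 J m r"
  shows "\<exists>k r'. k \<le> 13 * J + 18 \<and> ((steps xs k (34, r) = (69, r') \<and> halt_inv xs \<epsilon> r')
    \<or> (steps xs k (34, r) = (34, r') \<and> level_inv xs \<epsilon> T0 J (Suc m) r'
       \<and> \<not> levels_suffice xs (slack \<epsilon>) T0 m))"
proof -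
  define \<rho> where "\<rho> = 1 + slack \<epsilon>"
  have \<rho>: "1 < \<rho>" unfolding \<rho>_def using slack_pos[OF \<open>0 < \<epsilon>\<close>] by simp
  define T where "T = r 15"
  have "0 < T" unfolding T_def using inv threshold_pos[OF T0(2) \<rho>] unfolding level_inv_def \<rho>_def by simp
  obtain r1 where r1: "steps xs 2 (34, r) = (36, r1)" "r1 10 = r 12" "r1 11 = r 13"
    "\<forall>i. i \<notin> {10, 11} \<longrightarrow> r1 i = r i"
    using steps_level_start[of xs r] inv unfolding level_inv_def fixed_regs_def by auto
  have "count_ge xs T < \<rho> ^ fib J"
    using count_ge_le_length[of xs T] inv unfolding level_inv_def \<rho>_def by linarith
  also have "\<dots> \<le> r 14 * \<rho> ^ fib J" using inv \<rho> unfolding level_inv_def by simp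
  finally have "search_inv xs \<epsilon> T J r1"
    using inv fixed_regs_update[of xs \<epsilon> r "{10, 11}" r1] r1
    unfolding search_inv_def level_inv_def T_def \<rho>_def by auto
  then obtain k1 r2 where r2: "k1 \<le> 13 * J" "steps xs k1 (36, r1) = (53, r2)"
    "1 \<le> r2 14" "r2 14 \<le> count_ge xs T" "count_ge xs T < r2 14 * \<rho>"
    "\<forall>i. i \<notin> {6, 7, 10, 11, 14, 18, 19} \<longrightarrow> r2 i = r1 i"
    using fib_search[OF sorted \<open>0 < \<epsilon>\<close> \<open>0 < T\<close>] unfolding \<rho>_def by blast
  have unchanged2: "r2 i = r i" if "i \<notin> {6, 7, 10, 11, 14, 18, 19}" for i
    using r1(4) r2(6) that by simp
  have fixed2: "fixed_regs xs \<epsilon> r2"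
    using fixed_regs_update[of xs \<epsilon> r "{6, 7, 10, 11, 14, 18, 19}" r2] inv unchanged2
    unfolding level_inv_def by simp
  have est: "layer_estimate xs (slack \<epsilon>) T0 m (r2 16)" and T2: "r2 15 = T"
    and thr: "T = threshold T0 (1 + slack \<epsilon>) m"
    using inv unchanged2[of 16] unchanged2[of 15] unfolding level_inv_def T_def by auto
  have X2: "1 \<le> r2 14" "r2 14 \<le> count_ge xs (r2 15)" "count_ge xs (r2 15) < r2 14 * (1 + slack \<epsilon>)"
    using r2(3-5) T2 unfolding \<rho>_def by auto
  obtain k2 r3 where k2: "k2 \<le> 16" and r3: "(steps xs k2 (53, r2) = (69, r3) \<and> halt_inv xs \<epsilon> r3)
    \<or> (steps xs k2 (53, r2) = (34, r3) \<and> r3 15 = T / \<rho> \<and> r3 16 = r2 16 + r2 14 * T / \<rho> * slack \<epsilon>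
       \<and> (\<forall>i. i \<notin> {6, 7, 15, 16, 17, 18, 19, 20} \<longrightarrow> r3 i = r2 i)
       \<and> \<not> levels_suffice xs (slack \<epsilon>) T0 m)"
    using level_end[OF sorted nonneg \<open>0 < \<epsilon>\<close> \<open>xs \<noteq> []\<close> T0 fixed2 T2[unfolded thr] X2 est] T2
    unfolding \<rho>_def by auto
  have steps: "steps xs (2 + k1 + k2) (34, r) = steps xs k2 (53, r2)"
    by (simp only: steps_add r1(1) r2(2))
  have time: "2 + k1 + k2 \<le> 13 * J + 18" using r2(1) k2 by simp
  show ?thesis
  proof (cases "steps xs k2 (53, r2) = (69, r3) \<and> halt_inv xs \<epsilon> r3")
    case True
    thus ?thesis using steps time by (intro exI[of _ "2 + k1 + k2"] exI[of _ r3]) auto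
  next
    case False
    hence next_level: "steps xs k2 (53, r2) = (34, r3)" "r3 15 = T / \<rho>"
      "r3 16 = r2 16 + r2 14 * T / \<rho> * slack \<epsilon>"
      "\<forall>i. i \<notin> {6, 7, 15, 16, 17, 18, 19, 20} \<longrightarrow> r3 i = r2 i"
      "\<not> levels_suffice xs (slack \<epsilon>) T0 m"
      using r3 by auto
    have "T / \<rho> = threshold T0 \<rho> (Suc m)" unfolding thr \<rho>_def using threshold_Suc \<rho> \<rho>_def by simp
    moreover have "count_ge xs T \<le> count_ge xs (T / \<rho>)"
      using \<open>0 < T\<close> \<rho> by (intro count_ge_antimono) (simp add: divide_le_eq)
    moreover have "layer_estimate xs (slack \<epsilon>) T0 (Suc m) (r3 16)"
      using layer_estimate_Suc[OF est slack_pos[OF \<open>0 < \<epsilon>\<close>] T0(2) thr r2(3-4)] r2(5) next_level(3)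
      unfolding \<rho>_def by simp
    ultimately have "level_inv xs \<epsilon> T0 J (Suc m) r3"
      using inv next_level(2,4) unchanged2 r2(3,4) fixed_regs_update[OF fixed2 next_level(4)]
      unfolding level_inv_def \<rho>_def by auto
    thus ?thesis using steps time next_level by (intro exI[of _ "2 + k1 + k2"] exI[of _ r3]) auto
  qed
qed

lemma level_loop:
  assumes sorted: "sorted xs" and nonneg: "\<forall>x\<in>set xs. 0 \<le> x" and "0 < \<epsilon>" and "xs \<noteq> []"
    and T0: "T0 = xs ! (length xs - 1)" "0 < T0" and suffice: "levels_suffice xs (slack \<epsilon>) T0 M"
  shows "level_inv xs \<epsilon> T0 J m r \<Longrightarrow> m \<le> M \<Longrightarrow>
    \<exists>k r'. k \<le> (M - m + 1) * (13 * J + 18) \<and> steps xs k (34, r) = (69, r') \<and> halt_inv xs \<epsilon> r'"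
proof (induction "M - m" arbitrary: m r)
  case 0
  hence "m = M" by simp
  thus ?case using one_level[OF sorted nonneg \<open>0 < \<epsilon>\<close> \<open>xs \<noteq> []\<close> T0 0(2)] suffice by auto
next
  case (Suc d)
  obtain k r' where k: "k \<le> 13 * J + 18" "(steps xs k (34, r) = (69, r') \<and> halt_inv xs \<epsilon> r')
     \<or> (steps xs k (34, r) = (34, r') \<and> level_inv xs \<epsilon> T0 J (Suc m) r')"
    using one_level[OF sorted nonneg \<open>0 < \<epsilon>\<close> \<open>xs \<noteq> []\<close> T0 Suc(3)] by blast
  show ?case
  proof (cases "steps xs k (34, r) = (69, r') \<and> halt_inv xs \<epsilon> r'")
    case True
    have "k \<le> (M - m + 1) * (13 * J + 18)" using k(1) by (simp add: trans_le_add2)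
    thus ?thesis using True by blast
  next
    case False
    hence continue: "steps xs k (34, r) = (34, r')" "level_inv xs \<epsilon> T0 J (Suc m) r'" using k(2) by auto
    have "d = M - Suc m" "Suc m \<le> M" using Suc by auto
    from Suc.hyps(1)[OF this(1) continue(2) this(2)] obtain k' r'' where
      rest: "k' \<le> (M - Suc m + 1) * (13 * J + 18)" "steps xs k' (34, r') = (69, r'')" "halt_inv xs \<epsilon> r''"
      by blast
    have "M - m + 1 = Suc (M - Suc m + 1)" using Suc by simp
    hence "k + k' \<le> (M - m + 1) * (13 * J + 18)" using k(1) rest(1) by simp
    moreover have "steps xs (k + k') (34, r) = (69, r'')" using continue(1) rest(2) by (simp add: steps_add)
    ultimately show ?thesis using rest(3) by blast
  qed
qed

section \<open>Running time\<close>

lemma divide_ln_one_plus_slack_le: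
  assumes "0 < \<epsilon>" "0 \<le> y"
  shows "y / ln (1 + slack \<epsilon>) \<le> 8 * (1 + 1 / \<epsilon>) * y"
proof -
  define g where "g = slack \<epsilon>"
  have g: "0 < g" "g \<le> 1 / 4" unfolding g_def using slack_pos[OF assms(1)] slack_le_quarter by auto
  have "g / 2 \<le> ln (1 + g)" using half_le_ln_one_plus g by simp
  hence "y / ln (1 + g) \<le> y / (g / 2)" using assms(2) g by (intro divide_left_mono) auto
  also have "\<dots> = 2 * y * (1 / g)" by simp
  also have "\<dots> \<le> 2 * y * (4 * (1 + 1 / \<epsilon>))"
    using inverse_slack_le[OF assms(1)] assms(2) unfolding g_def by (intro mult_left_mono) auto
  also have "\<dots> = 8 * (1 + 1 / \<epsilon>) * y" by (simp add: algebra_simps)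
  finally show ?thesis unfolding g_def .
qed

definition window_bound :: "real \<Rightarrow> nat \<Rightarrow> nat" where
  "window_bound \<rho> n = 2 * (nat \<lceil>log 2 (max 1 (ln (real n) / ln \<rho>))\<rceil> + 1) + 1"

lemma length_less_window_bound:
  assumes "1 < \<rho>" "1 \<le> n"
  shows "real n < \<rho> ^ fib (window_bound \<rho> n)"
proof -
  have "0 \<le> ln (real n) / ln \<rho>" using assms by simp
  from less_fib_log[OF this] have "ln (real n) / ln \<rho> < real (fib (window_bound \<rho> n))"
    unfolding window_bound_def .
  thus ?thesis using less_power_if_log_less[OF assms(1)] assms(2) by simp
qed

lemma window_bound_le:
  assumes "0 < \<epsilon>" and n: "1 \<le> real n * slack \<epsilon>"
  shows "real (window_bound (1 + slack \<epsilon>) n) \<le> 13 * (1 + plog (1 / \<epsilon>) + plog (plog (real n)))"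
proof -
  define Ln where "Ln = log 2 (real n)"
  have "real n * slack \<epsilon> \<le> real n * (1 / 4)" using slack_le_quarter by (intro mult_left_mono) auto
  hence "4 \<le> real n" using n by simp
  hence "log 2 4 \<le> Ln" unfolding Ln_def by simp
  hence Ln: "2 \<le> Ln" using log_pow_cancel[of "2::real" 2] by simp
  have plog_n: "plog (real n) = Ln" unfolding plog_def Ln_def using \<open>4 \<le> real n\<close> by simp
  have ln_n: "0 \<le> ln (real n)" "ln (real n) \<le> Ln"
    using \<open>4 \<le> real n\<close> ln_le_log2[of "real n"] unfolding Ln_def by auto
  have "ln (real n) / ln (1 + slack \<epsilon>) \<le> 8 * (1 + 1 / \<epsilon>) * ln (real n)"
    by (rule divide_ln_one_plus_slack_le[OF assms(1) ln_n(1)])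
  also have "\<dots> \<le> 8 * (1 + 1 / \<epsilon>) * Ln"
    using ln_n(2) assms(1) by (intro mult_left_mono) auto
  also have "\<dots> \<le> 16 * max 1 (1 / \<epsilon>) * Ln" using Ln by (intro mult_right_mono) auto
  finally have "max 1 (ln (real n) / ln (1 + slack \<epsilon>)) \<le> 16 * max 1 (1 / \<epsilon>) * Ln"
    using Ln mult_mono[of 16 "16 * max 1 (1 / \<epsilon>)" 1 Ln] by auto
  hence "log 2 (max 1 (ln (real n) / ln (1 + slack \<epsilon>))) \<le> log 2 (16 * max 1 (1 / \<epsilon>) * Ln)"
    by (intro log_mono) auto
  also have "\<dots> = log 2 16 + log 2 (max 1 (1 / \<epsilon>)) + log 2 Ln"
    using Ln \<open>0 < \<epsilon>\<close> by (simp add: log_mult max_def)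
  also have "\<dots> = 4 + plog (1 / \<epsilon>) + plog (plog (real n))"
  proof -
    have "plog (plog (real n)) = log 2 Ln" unfolding plog_n using Ln by (simp add: plog_def)
    thus ?thesis using log_pow_cancel[of "2::real" 4] unfolding plog_def by simp
  qed
  finally have x: "log 2 (max 1 (ln (real n) / ln (1 + slack \<epsilon>))) \<le> 4 + plog (1 / \<epsilon>) + plog (plog (real n))"
    (is "?x \<le> _") .
  have "0 \<le> ?x" by simp
  hence "real (nat \<lceil>?x\<rceil>) = of_int \<lceil>?x\<rceil>" by simp
  hence "real (window_bound (1 + slack \<epsilon>) n) \<le> 2 * (?x + 1) + 3"
    unfolding window_bound_def by simp linarith
  moreover have "0 \<le> plog (1 / \<epsilon>)" "0 \<le> plog (plog (real n))" unfolding plog_def by simp_all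
  ultimately show ?thesis using x by (simp add: algebra_simps)
qed

definition level_bound :: "real list \<Rightarrow> real \<Rightarrow> nat" where
  "level_bound xs g = min (nat \<lceil>ln (ratio xs) / ln (1 + g)\<rceil>)
     (nat \<lceil>ln (real (length xs) / g\<^sup>2) / ln (1 + g)\<rceil> + 1)"

lemma level_bound_le:
  assumes "0 < \<epsilon>" and n: "1 \<le> real (length xs) * slack \<epsilon>" and ratio: "1 \<le> ratio xs"
  shows "real (level_bound xs (slack \<epsilon>)) + 1
    \<le> 27 * (1 + 1 / \<epsilon>) * (1 + min (plog (real (length xs))) (plog (ratio xs)))"
proof -
  define g where "g = slack \<epsilon>"
  define n where "n = real (length xs)"
  define A where "A = 1 + 1 / \<epsilon>"
  have g: "0 < g" "g \<le> 1" "1 \<le> n * g"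
    unfolding g_def n_def using slack_pos[OF assms(1)] slack_le_quarter[of \<epsilon>] n by auto
  have "n * g \<le> n * 1" using g unfolding n_def by (intro mult_left_mono) auto
  hence "1 \<le> n" using g by simp
  have A: "1 \<le> A" unfolding A_def using assms(1) by simp
  have "1 / g \<le> n" using g by (simp add: field_simps)
  have "n / g\<^sup>2 = n * (1 / g)\<^sup>2" by (simp add: power2_eq_square)
  also have "\<dots> \<le> n * n\<^sup>2" using \<open>1 / g \<le> n\<close> g \<open>1 \<le> n\<close> by (intro mult_left_mono power_mono) auto
  finally have "ln (n / g\<^sup>2) \<le> ln (n ^ 3)"
    using g \<open>1 \<le> n\<close> by (intro ln_mono) (auto simp: power2_eq_square power3_eq_cube)
  also have "\<dots> = 3 * ln n" using \<open>1 \<le> n\<close> by (simp add: ln_realpow)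
  also have "\<dots> \<le> 3 * plog n" using ln_le_log2[OF \<open>1 \<le> n\<close>] \<open>1 \<le> n\<close> unfolding plog_def by simp
  finally have ln_tail: "ln (n / g\<^sup>2) \<le> 3 * plog n" .
  have "1 \<le> n / g\<^sup>2" using g \<open>1 \<le> n\<close> power_le_one[of g 2] by (simp add: field_simps)
  hence "0 \<le> ln (n / g\<^sup>2) / ln (1 + g)" using g by simp
  hence "real (nat \<lceil>ln (n / g\<^sup>2) / ln (1 + g)\<rceil> + 1) \<le> ln (n / g\<^sup>2) / ln (1 + g) + 2" by linarith
  also have "\<dots> \<le> 8 * A * ln (n / g\<^sup>2) + 2"
    using divide_ln_one_plus_slack_le[OF assms(1), of "ln (n / g\<^sup>2)"] \<open>1 \<le> n / g\<^sup>2\<close>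
    unfolding A_def g_def by simp
  also have "\<dots> \<le> 24 * A * plog n + 2" using ln_tail A by simp
  finally have by_length: "real (level_bound xs g) + 1 \<le> 24 * A * plog n + 3"
    unfolding level_bound_def n_def by linarith
  have "0 \<le> ln (ratio xs) / ln (1 + g)" using g ratio by simp
  hence "real (nat \<lceil>ln (ratio xs) / ln (1 + g)\<rceil>) \<le> ln (ratio xs) / ln (1 + g) + 1" by linarith
  also have "\<dots> \<le> 8 * A * ln (ratio xs) + 1"
    using divide_ln_one_plus_slack_le[OF assms(1), of "ln (ratio xs)"] ratio unfolding A_def g_def by simp
  also have "\<dots> \<le> 8 * A * plog (ratio xs) + 1"
    using ln_le_log2[OF ratio] ratio A unfolding plog_def by simp
  finally have by_ratio: "real (level_bound xs g) + 1 \<le> 8 * A * plog (ratio xs) + 2"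
    unfolding level_bound_def by linarith
  have "0 \<le> plog x" for x unfolding plog_def by simp
  hence "real (level_bound xs g) + 1 \<le> 27 * A * (1 + min (plog n) (plog (ratio xs)))"
    using by_length by_ratio A by (cases "plog n \<le> plog (ratio xs)") (auto simp: algebra_simps min_def)
  thus ?thesis unfolding A_def g_def n_def .
qed

lemma bound_ge: "0 < \<epsilon> \<Longrightarrow> 1 + 1 / \<epsilon> \<le> bound \<epsilon> xs"
proof -
  assume "0 < \<epsilon>"
  have "0 \<le> plog x" for x unfolding plog_def by simp
  hence "(1 + 1 / \<epsilon>) * 1 * 1 \<le> bound \<epsilon> xs"
    unfolding bound_def using \<open>0 < \<epsilon>\<close> by (intro mult_mono) (auto simp: add_nonneg_nonneg)
  thus ?thesis by simp
qed

lemma step_count_le_bound: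
  assumes "0 < \<epsilon>" and W: "real W \<le> 13 * (1 + plog (1 / \<epsilon>) + plog (plog (real (length xs))))"
    and M: "real M + 1 \<le> 27 * (1 + 1 / \<epsilon>) * (1 + min (plog (real (length xs))) (plog (ratio xs)))"
  shows "real (20 + 5 * W + (M + 1) * (13 * W + 18)) \<le> 6000 * bound \<epsilon> xs"
proof -
  define A where "A = 1 + 1 / \<epsilon>"
  define L where "L = 1 + min (plog (real (length xs))) (plog (ratio xs))"
  define \<Lambda> where "\<Lambda> = 1 + plog (1 / \<epsilon>) + plog (plog (real (length xs)))"
  have nonneg: "0 \<le> plog x" for x unfolding plog_def by simp
  have A: "1 \<le> A" and L: "1 \<le> L" and \<Lambda>: "1 \<le> \<Lambda>"
    unfolding A_def L_def \<Lambda>_def using assms(1) nonneg by auto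
  have B: "bound \<epsilon> xs = A * L * \<Lambda>" unfolding bound_def A_def L_def \<Lambda>_def by simp
  have "1 * 1 * \<Lambda> \<le> A * L * \<Lambda>" using A L \<Lambda> by (intro mult_mono) auto
  have "real (20 + 5 * W + (M + 1) * (13 * W + 18)) = 20 + 5 * real W + (real M + 1) * (13 * real W + 18)"
    by (simp add: algebra_simps)
  also have "\<dots> \<le> 20 + 5 * (13 * \<Lambda>) + (27 * A * L) * (13 * (13 * \<Lambda>) + 18)"
    using W M \<Lambda> unfolding A_def L_def \<Lambda>_def by (intro add_mono mult_mono) auto
  also have "\<dots> \<le> 85 * \<Lambda> + (27 * A * L) * (187 * \<Lambda>)"
    using \<Lambda> A L by (intro add_mono mult_left_mono) auto
  also have "\<dots> = 85 * \<Lambda> + 5049 * (A * L * \<Lambda>)" by (simp add: algebra_simps)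
  also have "\<dots> \<le> 6000 * (A * L * \<Lambda>)" using \<open>1 * 1 * \<Lambda> \<le> A * L * \<Lambda>\<close> \<Lambda> by simp
  finally show ?thesis unfolding B .
qed

lemma sorted_le_last_nth: "sorted xs \<Longrightarrow> x \<in> set xs \<Longrightarrow> x \<le> xs ! (length xs - 1)"
  by (auto simp: in_set_conv_nth intro: sorted_nth_mono)

lemma ratio_eq:
  assumes sorted: "sorted xs" and "xs \<noteq> []" and T0: "T0 = xs ! (length xs - 1)" "0 < T0"
  shows "ratio xs = T0 / Min {x \<in> set xs. 0 < x}"
proof -
  have "T0 \<in> set xs" using T0(1) \<open>xs \<noteq> []\<close> by simp
  moreover have "Max (set xs) = T0"
    using \<open>T0 \<in> set xs\<close> sorted_le_last_nth[OF sorted] T0(1) by (intro Max_eqI) auto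
  ultimately show ?thesis unfolding ratio_def using T0(2) by auto
qed

lemma levels_suffice_of_ratio:
  assumes sorted: "sorted xs" and "xs \<noteq> []" and T0: "T0 = xs ! (length xs - 1)" "0 < T0"
    and "0 < g" and m: "ratio xs \<le> (1 + g) ^ m"
  shows "levels_suffice xs g T0 m"
proof -
  define xmin where "xmin = Min {x \<in> set xs. 0 < x}"
  have "T0 \<in> {x \<in> set xs. 0 < x}" using T0 \<open>xs \<noteq> []\<close> by simp
  hence "xmin \<in> {x \<in> set xs. 0 < x}" unfolding xmin_def by (intro Min_in) auto
  hence xmin: "0 < xmin" "\<And>x. x \<in> set xs \<Longrightarrow> 0 < x \<Longrightarrow> xmin \<le> x"
    unfolding xmin_def by (auto intro: Min_le)
  have ratio: "ratio xs = T0 / xmin" unfolding xmin_def by (rule ratio_eq[OF sorted \<open>xs \<noteq> []\<close> T0])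
  hence "T0 / (1 + g) ^ m \<le> T0 / ratio xs"
    using m xmin T0(2) \<open>0 < g\<close> by (intro divide_left_mono) auto
  also have "\<dots> = xmin" using ratio T0(2) xmin by simp
  finally show ?thesis unfolding levels_suffice_def threshold_def using xmin(2) by force
qed

lemma levels_suffice_of_length:
  assumes "0 < T0" and g: "0 < g" and "1 \<le> real (length xs)"
    and m: "real (length xs) / g\<^sup>2 \<le> (1 + g) ^ m"
  shows "levels_suffice xs g T0 (Suc m)"
proof -
  define n where "n = real (length xs)"
  have "0 < n / g\<^sup>2" using assms unfolding n_def by (intro divide_pos_pos) auto
  have "n * threshold T0 (1 + g) (Suc m) = n * T0 / ((1 + g) * (1 + g) ^ m)"
    unfolding threshold_def by simp
  also have "\<dots> \<le> n * T0 / ((1 + g) * (n / g\<^sup>2))"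
    using m g \<open>0 < T0\<close> \<open>0 < n / g\<^sup>2\<close> assms(3) unfolding n_def
    by (intro divide_left_mono mult_left_mono mult_pos_pos) auto
  also have "\<dots> = g * (g * T0 / (1 + g))"
  proof -
    have "n \<noteq> 0" "1 + g \<noteq> 0" using assms(3) g unfolding n_def by auto
    hence "n + g * n \<noteq> 0" by (metis distrib_right mult_eq_0_iff mult_1)
    thus ?thesis using \<open>n \<noteq> 0\<close> g by (simp add: field_simps power2_eq_square)
  qed
  finally show ?thesis unfolding levels_suffice_def n_def by simp
qed

lemma one_le_ratio: "1 \<le> ratio xs"
proof (cases "\<exists>x\<in>set xs. 0 < x")
  case True
  define P where "P = {x \<in> set xs. 0 < x}"
  have "finite P" "P \<noteq> {}" unfolding P_def using True by auto
  hence "Min P \<in> set xs" "0 < Min P" using Min_in[of P] unfolding P_def by auto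
  hence "Min P \<le> Max (set xs)" by (intro Max_ge) auto
  thus ?thesis unfolding ratio_def P_def[symmetric] using True \<open>0 < Min P\<close> by simp
qed (simp add: ratio_def)

lemma levels_suffice_level_bound:
  assumes sorted: "sorted xs" and "xs \<noteq> []" and T0: "T0 = xs ! (length xs - 1)" "0 < T0"
    and "0 < g"
  shows "levels_suffice xs g T0 (level_bound xs g)"
proof -
  have \<rho>: "1 < 1 + g" using \<open>0 < g\<close> by simp
  have n: "1 \<le> real (length xs)" using \<open>xs \<noteq> []\<close> by (simp add: Suc_le_eq)
  define m_ratio where "m_ratio = nat \<lceil>ln (ratio xs) / ln (1 + g)\<rceil>"
  define m_length where "m_length = nat \<lceil>ln (real (length xs) / g\<^sup>2) / ln (1 + g)\<rceil>"
  have "levels_suffice xs g T0 m_ratio"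
    using levels_suffice_of_ratio[OF assms] le_power_ceiling_log[OF \<rho>] one_le_ratio[of xs]
    unfolding m_ratio_def by simp
  moreover have "0 < real (length xs) / g\<^sup>2" using n \<open>0 < g\<close> by (intro divide_pos_pos) auto
  hence "levels_suffice xs g T0 (Suc m_length)"
    using levels_suffice_of_length[OF T0(2) \<open>0 < g\<close> n le_power_ceiling_log[OF \<rho>]]
    unfolding m_length_def by simp
  ultimately show ?thesis unfolding level_bound_def m_ratio_def[symmetric] m_length_def[symmetric]
    by (cases "m_ratio \<le> Suc m_length") (auto simp: min_def)
qed

section \<open>Correctness\<close>

lemma halted_at: "pc \<in> {19, 71, 73} \<Longrightarrow> halted approx_sum_prog (pc, r)"
  by (auto simp: halted_def approx_sum_prog_length approx_sum_prog_nth)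

lemma approx_refl: "0 \<le> S \<Longrightarrow> 0 < \<epsilon> \<Longrightarrow> approx \<epsilon> S S"
  unfolding approx_def by (auto simp: field_simps intro: order.trans[OF _ mult_right_mono[of 1]])

lemma approx_of_halt_inv:
  assumes nonneg: "\<forall>x\<in>set xs. 0 \<le> x" and "0 < \<epsilon>" and inv: "halt_inv xs \<epsilon> r"
  shows "approx \<epsilon> (sum_list xs) ((1 + \<epsilon>) * r 17)"
proof -
  define g where "g = slack \<epsilon>"
  have g: "0 < g" "g \<le> 1 / 4" "g \<le> \<epsilon> / 4"
    unfolding g_def using slack_pos slack_le_quarter slack_le \<open>0 < \<epsilon>\<close> by auto
  have S: "0 \<le> sum_list xs" using nonneg by (simp add: sum_list_nonneg)
  have low: "r 17 \<le> sum_list xs" and high: "sum_list xs \<le> ((1 + g)\<^sup>2 + g) * r 17"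
    using inv unfolding halt_inv_def g_def by auto
  have "0 \<le> r 17"
  proof (rule ccontr)
    assume "\<not> 0 \<le> r 17"
    hence "((1 + g)\<^sup>2 + g) * r 17 < 0" using g by (simp add: mult_pos_neg add_pos_pos)
    thus False using high S by simp
  qed
  have "g * g \<le> g * (1 / 4)" using g by (intro mult_left_mono) auto
  moreover have "(1 + g)\<^sup>2 + g = 1 + 3 * g + g * g" by (simp add: power2_eq_square algebra_simps)
  ultimately have "(1 + g)\<^sup>2 + g \<le> 1 + \<epsilon>" using g by linarith
  hence "sum_list xs \<le> (1 + \<epsilon>) * r 17"
    using high \<open>0 \<le> r 17\<close> by (meson mult_right_mono order_trans)
  also have "\<dots> \<le> (1 + \<epsilon>) * ((1 + \<epsilon>) * r 17)"
    using \<open>0 < \<epsilon>\<close> \<open>0 \<le> r 17\<close> mult_right_mono[of 1 "1 + \<epsilon>" "(1 + \<epsilon>) * r 17"] by simp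
  finally have "sum_list xs / (1 + \<epsilon>) \<le> (1 + \<epsilon>) * r 17"
    using \<open>0 < \<epsilon>\<close> by (simp add: divide_le_eq mult.commute)
  moreover have "(1 + \<epsilon>) * r 17 \<le> (1 + \<epsilon>) * sum_list xs" using low \<open>0 < \<epsilon>\<close> by simp
  ultimately show ?thesis unfolding approx_def by simp
qed

lemma run_exact:
  assumes "fixed_regs xs \<epsilon> r"
  shows "\<exists>t r'. t \<le> 5 * length xs + 4 \<and> steps xs t (11, r) = (19, r') \<and> r' 0 = sum_list xs"
proof -
  have "fixed_regs xs \<epsilon> (r(8 := 1, 9 := 0))" using assms unfolding fixed_regs_def by simp
  hence "\<exists>k r'. k \<le> 5 * (length xs + 1 - 1) + 2 \<and> steps xs k (13, r(8 := 1, 9 := 0)) = (19, r')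
    \<and> r' 0 = sum_list xs"
    by (rule steps_exact_loop) simp_all
  then obtain k r' where k: "k \<le> 5 * length xs + 2" "steps xs k (13, r(8 := 1, 9 := 0)) = (19, r')"
    "r' 0 = sum_list xs"
    by auto
  have "steps xs (2 + k) (11, r) = (19, r')" by (simp only: steps_add steps_exact_start k(2))
  thus ?thesis using k by (intro exI[of _ "2 + k"] exI[of _ r']) auto
qed

lemma levels_start:
  assumes "0 < \<epsilon>" and fixed: "fixed_regs xs \<epsilon> r" and n: "1 \<le> real (length xs) * slack \<epsilon>"
    and positive: "\<not> query xs (r 0) \<le> r 2"
  defines "W \<equiv> window_bound (1 + slack \<epsilon>) (length xs)"
  shows "\<exists>k J r'. k \<le> 5 * W + 5 \<and> J \<le> W \<and> steps xs k (20, r) = (34, r')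
    \<and> level_inv xs \<epsilon> (xs ! (length xs - 1)) J 0 r'"
proof -
  define \<rho> where "\<rho> = 1 + slack \<epsilon>"
  have \<rho>: "1 < \<rho>" unfolding \<rho>_def using slack_pos[OF \<open>0 < \<epsilon>\<close>] by simp
  have "xs \<noteq> []" using n by auto
  define T0 where "T0 = xs ! (length xs - 1)"
  have regs: "r 0 = real (length xs)" "r 2 = 0" "r 5 = \<rho>"
    using fixed unfolding fixed_regs_def \<rho>_def by auto
  have query: "query xs (r 0) = T0"
    unfolding T0_def regs(1) query_of_nat using \<open>xs \<noteq> []\<close> by (simp add: Suc_le_eq)
  obtain r1 where r1: "steps xs 4 (20, r) = (24, r1)" "r1 15 = T0" "r1 10 = \<rho>" "r1 11 = 1"
    "\<forall>i. i \<notin> {10, 11, 15} \<longrightarrow> r1 i = r i"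
    using steps_max_pos[OF positive] query regs by auto
  have fixed1: "fixed_regs xs \<epsilon> r1" using fixed_regs_update[OF fixed r1(5)] by simp
  have "fib_window \<rho> 1 (r1 10) (r1 11)" using r1 unfolding fib_window_def by simp
  moreover have "1 \<le> W" unfolding W_def window_bound_def by simp
  moreover have W: "real (length xs) < \<rho> ^ fib W"
    unfolding W_def \<rho>_def using length_less_window_bound \<rho> \<open>xs \<noteq> []\<close> \<rho>_def by (simp add: Suc_le_eq)
  ultimately obtain k1 r2 J where r2: "k1 \<le> 5 * (W - 1) + 2" "steps xs k1 (24, r1) = (30, r2)"
    "fib_window \<rho> J (r2 10) (r2 11)" "J \<le> W" "real (length xs) < \<rho> ^ fib J"
    "\<forall>i. i \<notin> {6, 10, 11} \<longrightarrow> r2 i = r1 i"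
    using window_grow[OF \<open>0 < \<epsilon>\<close> \<rho>_def W fixed1] by blast
  have fixed2: "fixed_regs xs \<epsilon> r2" using fixed_regs_update[OF fixed1 r2(6)] by simp
  obtain r3 where r3: "steps xs 4 (30, r2) = (34, r3)" "r3 12 = r2 10" "r3 13 = r2 11"
    "r3 14 = 1" "r3 16 = 0" "\<forall>i. i \<notin> {12, 13, 14, 16} \<longrightarrow> r3 i = r2 i"
    using steps_levels_setup[of xs r2] fixed2 unfolding fixed_regs_def by auto
  have "{length xs - 1} \<subseteq> {j. j < length xs \<and> T0 \<le> xs ! j}" using \<open>xs \<noteq> []\<close> T0_def by auto
  from card_mono[OF _ this] have "1 \<le> count_ge xs T0" unfolding count_ge_def by simp
  moreover have "r3 15 = T0" using r3(6) r2(6) r1(2) by simp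
  moreover have "fixed_regs xs \<epsilon> r3" using fixed_regs_update[OF fixed2 r3(6)] by simp
  ultimately have "level_inv xs \<epsilon> T0 J 0 r3"
    using r2(3,5) r3(2-5) layer_estimate_0 unfolding level_inv_def \<rho>_def threshold_def by simp
  moreover have "steps xs (4 + k1 + 4) (20, r) = (34, r3)"
    by (simp only: steps_add r1(1) r2(2) r3(1))
  moreover have "4 + k1 + 4 \<le> 5 * W + 5" using r2(1) \<open>1 \<le> W\<close> by simp
  ultimately show ?thesis using r2(4) unfolding T0_def by blast
qed

lemma run_approx:
  assumes sorted: "sorted xs" and nonneg: "\<forall>x\<in>set xs. 0 \<le> x" and "0 < \<epsilon>"
    and fixed: "fixed_regs xs \<epsilon> r" and n: "1 \<le> real (length xs) * slack \<epsilon>"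
    and positive: "\<not> query xs (r 0) \<le> r 2"
  defines "W \<equiv> window_bound (1 + slack \<epsilon>) (length xs)"
  shows "\<exists>t r'. t \<le> 10 + 5 * W + (level_bound xs (slack \<epsilon>) + 1) * (13 * W + 18)
    \<and> steps xs t (20, r) = (71, r') \<and> approx \<epsilon> (sum_list xs) (r' 0)"
proof -
  have "xs \<noteq> []" using n by auto
  define T0 where "T0 = xs ! (length xs - 1)"
  have "0 < T0"
    using positive fixed \<open>xs \<noteq> []\<close> unfolding T0_def fixed_regs_def by (simp add: query_of_nat Suc_le_eq)
  obtain k1 J r1 where r1: "k1 \<le> 5 * W + 5" "J \<le> W" "steps xs k1 (20, r) = (34, r1)"
    "level_inv xs \<epsilon> T0 J 0 r1"
    using levels_start[OF \<open>0 < \<epsilon>\<close> fixed n positive] unfolding W_def T0_def by blast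
  from level_loop[OF sorted nonneg \<open>0 < \<epsilon>\<close> \<open>xs \<noteq> []\<close> T0_def \<open>0 < T0\<close>
      levels_suffice_level_bound[OF sorted \<open>xs \<noteq> []\<close> T0_def \<open>0 < T0\<close> slack_pos[OF \<open>0 < \<epsilon>\<close>]]
      r1(4) le0]
  obtain k2 r2 where r2: "k2 \<le> (level_bound xs (slack \<epsilon>) + 1) * (13 * J + 18)"
    "steps xs k2 (34, r1) = (69, r2)" "halt_inv xs \<epsilon> r2"
    by auto
  define r3 where "r3 = r2(6 := r2 3 + r2 1, 0 := (r2 3 + r2 1) * r2 17)"
  have "steps xs (k1 + k2 + 2) (20, r) = (71, r3)"
    unfolding r3_def by (simp only: steps_add r1(3) r2(2) steps_output)
  moreover have "approx \<epsilon> (sum_list xs) (r3 0)"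
    using approx_of_halt_inv[OF nonneg \<open>0 < \<epsilon>\<close> r2(3)] r2(3)
    unfolding r3_def halt_inv_def fixed_regs_def by simp
  moreover have "k1 + k2 + 2 \<le> 10 + 5 * W + (level_bound xs (slack \<epsilon>) + 1) * (13 * W + 18)"
  proof -
    have "13 * J + 18 \<le> 13 * W + 18" using r1(2) by simp
    hence "k2 \<le> (level_bound xs (slack \<epsilon>) + 1) * (13 * W + 18)"
      using r2(1) by (meson le_trans mult_le_mono2)
    thus ?thesis using r1(1) by simp
  qed
  ultimately show ?thesis by blast
qed

lemma short_list_correct:
  assumes nonneg: "\<forall>x\<in>set xs. 0 \<le> x" and "0 < \<epsilon>" and fixed: "fixed_regs xs \<epsilon> r"
    and short: "\<not> 1 \<le> real (length xs) * slack \<epsilon>" and "k0 \<le> 10"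
  shows "\<exists>t r'. real (k0 + t) \<le> 6000 * bound \<epsilon> xs \<and> steps xs t (11, r) = (19, r')
    \<and> approx \<epsilon> (sum_list xs) (r' 0)"
proof -
  obtain t r' where t: "t \<le> 5 * length xs + 4" "steps xs t (11, r) = (19, r')" "r' 0 = sum_list xs"
    using run_exact[OF fixed] by blast
  have "real (length xs) < 1 / slack \<epsilon>" using short slack_pos[OF \<open>0 < \<epsilon>\<close>] by (simp add: field_simps)
  hence "real (length xs) < 4 * (1 + 1 / \<epsilon>)" using inverse_slack_le[OF \<open>0 < \<epsilon>\<close>] by linarith
  moreover have "real k0 \<le> 10" "real t \<le> 5 * real (length xs) + 4"
    using \<open>k0 \<le> 10\<close> t(1) of_nat_mono[OF t(1)] by simp_all
  moreover have "1 \<le> 1 + 1 / \<epsilon>" using \<open>0 < \<epsilon>\<close> by simp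
  ultimately have "real (k0 + t) \<le> 34 * (1 + 1 / \<epsilon>)" unfolding of_nat_add by argo
  hence "real (k0 + t) \<le> 6000 * bound \<epsilon> xs" using bound_ge[OF \<open>0 < \<epsilon>\<close>, of xs] \<open>1 \<le> 1 + 1 / \<epsilon>\<close> by argo
  thus ?thesis using t approx_refl[OF sum_list_nonneg \<open>0 < \<epsilon>\<close>] nonneg by auto
qed

lemma sum_list_eq_0_of_max:
  assumes "sorted xs" "\<forall>x\<in>set xs. 0 \<le> x" "xs \<noteq> []" "xs ! (length xs - 1) \<le> 0"
  shows "sum_list xs = 0"
proof -
  have "\<forall>x\<in>set xs. x = 0" using assms sorted_le_last_nth[OF assms(1)] by force
  thus ?thesis by (induction xs) auto
qed

lemma zero_max_correct:
  assumes sorted: "sorted xs" and nonneg: "\<forall>x\<in>set xs. 0 \<le> x" and "0 < \<epsilon>" "xs \<noteq> []"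
    and fixed: "fixed_regs xs \<epsilon> r" and zero: "query xs (r 0) \<le> r 2" and "k0 \<le> 10"
  shows "\<exists>r'. real (k0 + 3) \<le> 6000 * bound \<epsilon> xs \<and> steps xs 3 (20, r) = (73, r')
    \<and> approx \<epsilon> (sum_list xs) (r' 0)"
proof -
  obtain r' where r': "steps xs 3 (20, r) = (73, r')" "r' 0 = 0" using steps_max_zero[OF zero] by blast
  have "xs ! (length xs - 1) \<le> 0"
    using zero fixed \<open>xs \<noteq> []\<close> unfolding fixed_regs_def by (simp add: query_of_nat Suc_le_eq)
  hence "sum_list xs = 0" by (rule sum_list_eq_0_of_max[OF sorted nonneg \<open>xs \<noteq> []\<close>])
  moreover have "real k0 \<le> 10" "1 \<le> 1 + 1 / \<epsilon>" using \<open>k0 \<le> 10\<close> \<open>0 < \<epsilon>\<close> by simp_all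
  hence "real (k0 + 3) \<le> 6000 * bound \<epsilon> xs"
    using bound_ge[OF \<open>0 < \<epsilon>\<close>, of xs] unfolding of_nat_add of_nat_numeral by argo
  ultimately show ?thesis using r' by (simp add: approx_def)
qed

lemma long_list_correct:
  assumes sorted: "sorted xs" and nonneg: "\<forall>x\<in>set xs. 0 \<le> x" and "0 < \<epsilon>"
    and fixed: "fixed_regs xs \<epsilon> r" and long: "1 \<le> real (length xs) * slack \<epsilon>"
    and positive: "\<not> query xs (r 0) \<le> r 2" and "k0 \<le> 10"
  shows "\<exists>t r'. real (k0 + t) \<le> 6000 * bound \<epsilon> xs \<and> steps xs t (20, r) = (71, r')
    \<and> approx \<epsilon> (sum_list xs) (r' 0)"
proof -
  define W where "W = window_bound (1 + slack \<epsilon>) (length xs)"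
  obtain t r' where t: "t \<le> 10 + 5 * W + (level_bound xs (slack \<epsilon>) + 1) * (13 * W + 18)"
    "steps xs t (20, r) = (71, r')" "approx \<epsilon> (sum_list xs) (r' 0)"
    using run_approx[OF sorted nonneg \<open>0 < \<epsilon>\<close> fixed long positive] unfolding W_def by blast
  have "k0 + t \<le> 20 + 5 * W + (level_bound xs (slack \<epsilon>) + 1) * (13 * W + 18)"
    using \<open>k0 \<le> 10\<close> t(1) by linarith
  also have "real \<dots> \<le> 6000 * bound \<epsilon> xs"
    using step_count_le_bound[OF \<open>0 < \<epsilon>\<close> _ level_bound_le[OF \<open>0 < \<epsilon>\<close> long one_le_ratio]]
      window_bound_le[OF \<open>0 < \<epsilon>\<close> long] unfolding W_def by blast
  finally show ?thesis using t by auto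
qed

lemma approx_sum_prog_correct:
  assumes sorted: "sorted xs" and nonneg: "\<forall>x\<in>set xs. 0 \<le> x" and "0 < \<epsilon>"
  shows "\<exists>t pc r. real t \<le> 6000 * bound \<epsilon> xs \<and> steps xs t (init (length xs) \<epsilon>) = (pc, r)
    \<and> pc \<in> {19, 71, 73} \<and> approx \<epsilon> (sum_list xs) (r 0)"
proof -
  obtain k0 r pc0 where k0: "k0 \<le> 10" "fixed_regs xs \<epsilon> r" "steps xs k0 (init (length xs) \<epsilon>) = (pc0, r)"
    and pc0: "pc0 = (if 1 \<le> real (length xs) * slack \<epsilon> then 20 else 11)"
    using steps_init by blast
  have "\<exists>t pc r'. real (k0 + t) \<le> 6000 * bound \<epsilon> xs \<and> steps xs t (pc0, r) = (pc, r')
    \<and> pc \<in> {19, 71, 73} \<and> approx \<epsilon> (sum_list xs) (r' 0)"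
  proof (cases "1 \<le> real (length xs) * slack \<epsilon>")
    case False
    thus ?thesis using short_list_correct[OF nonneg \<open>0 < \<epsilon>\<close> k0(2) False k0(1)] pc0 by auto
  next
    case True
    hence "xs \<noteq> []" by auto
    show ?thesis
    proof (cases "query xs (r 0) \<le> r 2")
      case zero: True
      then obtain r' where "real (k0 + 3) \<le> 6000 * bound \<epsilon> xs" "steps xs 3 (20, r) = (73, r')"
        "approx \<epsilon> (sum_list xs) (r' 0)"
        using zero_max_correct[OF sorted nonneg \<open>0 < \<epsilon>\<close> \<open>xs \<noteq> []\<close> k0(2) zero k0(1)] by blast
      thus ?thesis using pc0 True by (intro exI[of _ 3] exI[of _ 73] exI[of _ r']) simp
    next
      case positive: False
      thus ?thesis using long_list_correct[OF sorted nonneg \<open>0 < \<epsilon>\<close> k0(2) True positive k0(1)] pc0 True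
        by auto
    qed
  qed
  then obtain t pc r' where run: "real (k0 + t) \<le> 6000 * bound \<epsilon> xs" "steps xs t (pc0, r) = (pc, r')"
    "pc \<in> {19, 71, 73}" "approx \<epsilon> (sum_list xs) (r' 0)"
    by blast
  have "steps xs (k0 + t) (init (length xs) \<epsilon>) = (pc, r')" using k0(3) run(2) by (simp add: steps_add)
  thus ?thesis using run by blast
qed

theorem theorem1:
  shows "\<exists>(P::prog) (C::real). C > 0 \<and>
    (\<forall>\<epsilon>::real. \<forall>xs::real list. \<epsilon> > 0 \<longrightarrow> sorted xs \<longrightarrow> (\<forall>x\<in>set xs. 0 \<le> x) \<longrightarrow>
       halts_within P xs \<epsilon> (C * bound \<epsilon> xs) (approx \<epsilon> (sum_list xs)))"
proof (intro exI[of _ approx_sum_prog] exI[of _ 6000] conjI allI impI)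
  fix \<epsilon> :: real and xs :: "real list"
  assume "0 < \<epsilon>" "sorted xs" "\<forall>x\<in>set xs. 0 \<le> x"
  then obtain t pc r where "real t \<le> 6000 * bound \<epsilon> xs" "run approx_sum_prog xs \<epsilon> t = (pc, r)"
    "pc \<in> {19, 71, 73}" "approx \<epsilon> (sum_list xs) (r 0)"
    using approx_sum_prog_correct unfolding run_eq_steps by blast
  thus "halts_within approx_sum_prog xs \<epsilon> (6000 * bound \<epsilon> xs) (approx \<epsilon> (sum_list xs))"
    unfolding halts_within_def using halted_at by auto
qed simp

end
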